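(* Consider Problem (P) under Assumption (A) over a graph satisfying Assumption (B), and run SONATA with weight matrix satisfying Assumption (W) and surrogates satisfying Assumption (C), where $\tilde\mu_{\min}\ge D^\ell_{\min}$. Then there exists a step-size threshold $\bar\alpha\in(0,1]$ such that for every step-size $\alpha\in(0,\bar\alpha)$ and every agent $i\in\{1,\dots,m\}$, the sequence $\{U(x_i^\nu)\}_{\nu\ge0}$ converges to $U^\star$ at an R-linear rate, i.e. $|U(x_i^\nu)-U^\star|=O(z^\nu)$ for some $z\in(0,1)$.
   Context: Problem (P): minimize $U(x):=F(x)+G(x)$ subject to $x\in\mathcal K$, where $F(x)=\frac1m\sum_{i=1}^m f_i(x)$. Assumption (A): $\mathcal K\subseteq\mathbb R^d$ is nonempty, closed, convex; each $f_i:\mathcal O\to\mathbb R$ is twice differentiable and convex on an open set $\mathcal O\supseteq\mathcal K$; $\mu I\preceq\nabla^2F(x)\preceq LI$ for all $x\in\mathcal K$, with $\mu>0$, $L<\infty$; $G:\mathcal K\to\mathbb R$ is convex (possibly nonsmooth). Let $x^\star$ be the unique minimizer and $U^\star=U(x^\star)$. Assumption (B): agents communicate over a connected undirected graph on nodes $\{1,\dots,m\}$ with edge set $\mathcal E$. Assumption (W): $W=(w_{ij})$ satisfies $w_{ii}>0$, $w_{ij}>0$ if $(i,j)\in\mathcal E$ and $w_{ij}=0$ otherwise ($i\neq j$), and $W$ is doubly stochastic. Assumption (C): each surrogate $\tilde f_i:\mathcal O\times\mathcal O\to\mathbb R$ is $C^2$ and, for all $x\in\mathcal K$: $\nabla\tilde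 f_i(x;x)=\nabla f_i(x)$ (gradient in the first argument); $\nabla\tilde f_i(\cdot;x)$ is $\tilde L_i$-Lipschitz on $\mathcal K$; $\tilde f_i(\cdot;x)$ is $\tilde\mu_i$-strongly convex on $\mathcal K$ ($\tilde\mu_i>0$). Constants $D_i^\ell\le D_i^u$ are such that $D_i^\ell I\preceq\nabla^2\tilde f_i(x;y)-\nabla^2F(x)\preceq D_i^uI$ for all $x,y\in\mathcal K$ (Hessian of $\tilde f_i$ in its first argument); $\tilde\mu_{\min}=\min_i\tilde\mu_i$, $D^\ell_{\min}=\min_iD_i^\ell$. SONATA (step-size $\alpha\in(0,1]$): initialize $x_i^0\in\mathcal K$, $y_i^0=\nabla f_i(x_i^0)$; for $\nu=0,1,\dots$ each agent computes $\hat x_i^\nu=\arg\min_{x_i\in\mathcal K}\tilde f_i(x_i;x_i^\nu)+(y_i^\nu-\nabla f_i(x_i^\nu))^\top(x_i-x_i^\nu)+G(x_i)$, $x_i^{\nu+1/2}=x_i^\nu+\alpha(\hat x_i^\nu-x_i^\nu)$, $x_i^{\nu+1}=\sum_jw_{ij}x_j^{\nu+1/2}$, $y_i^{\nu+1}=\sum_jw_{ij}\big(y_j^\nu+\nabla f_j(x_j^{\nu+1})-\nabla f_j(x_j^\nu)\big)$. *)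

theory Defs
  imports "HOL-Analysis.Analysis"
begin

definition C2_on :: "'b::euclidean_space set \<Rightarrow> ('b \<Rightarrow> real) \<Rightarrow> bool" where
  "C2_on S g \<longleftrightarrow>
     (\<exists>(g1 :: 'b \<Rightarrow> 'b \<Rightarrow>\<^sub>L real) (g2 :: 'b \<Rightarrow> 'b \<Rightarrow>\<^sub>L ('b \<Rightarrow>\<^sub>L real)).
        (\<forall>x\<in>S. (g has_derivative blinfun_apply (g1 x)) (at x)) \<and>
        (\<forall>x\<in>S. (g1 has_derivative blinfun_apply (g2 x)) (at x)) \<and>
        continuous_on S g2)"

definition strongly_convex_on :: "real \<Rightarrow> 'b::real_inner set \<Rightarrow> ('b \<Rightarrow> real) \<Rightarrow> bool" where
  "strongly_convex_on c S f \<longleftrightarrow> convex_on S (\<lambda>x. f x - (c / 2) * (norm x)\<^sup>2)"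

definition connected_undirected_graph :: "nat \<Rightarrow> (nat \<times> nat) set \<Rightarrow> bool" where
  "connected_undirected_graph m E \<longleftrightarrow>
     E \<subseteq> {0..<m} \<times> {0..<m} \<and> sym E \<and> (\<forall>i. (i, i) \<notin> E) \<and>
     (\<forall>i<m. \<forall>j<m. (i, j) \<in> E\<^sup>*)"

definition weight_matrix_ok :: "nat \<Rightarrow> (nat \<times> nat) set \<Rightarrow> (nat \<Rightarrow> nat \<Rightarrow> real) \<Rightarrow> bool" where
  "weight_matrix_ok m E W \<longleftrightarrow>
     (\<forall>i<m. W i i > 0) \<and>
     (\<forall>i<m. \<forall>j<m. i \<noteq> j \<longrightarrow> ((i, j) \<in> E \<longrightarrow> W i j > 0) \<and> ((i, j) \<notin> E \<longrightarrow> W i j = 0)) \<and>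
     (\<forall>i<m. \<forall>j<m. W i j \<ge> 0) \<and>
     (\<forall>i<m. (\<Sum>j<m. W i j) = 1) \<and>
     (\<forall>j<m. (\<Sum>i<m. W i j) = 1)"

definition is_argmin_on :: "('b \<Rightarrow> real) \<Rightarrow> 'b set \<Rightarrow> 'b \<Rightarrow> bool" where
  "is_argmin_on h K z \<longleftrightarrow> z \<in> K \<and> (\<forall>w\<in>K. h z \<le> h w)"

text \<open>A run of SONATA with step-size alpha. x i \<nu>, y i \<nu>, xh i \<nu> are
  x_i^\<nu>, y_i^\<nu>, hat x_i^\<nu> (agents indexed 0..<m).\<close>
definition sonata_run ::
  "nat \<Rightarrow> 'b::real_inner set \<Rightarrow> (nat \<Rightarrow> nat \<Rightarrow> real) \<Rightarrow> (nat \<Rightarrow> 'b \<Rightarrow> 'b)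
   \<Rightarrow> (nat \<Rightarrow> 'b \<Rightarrow> 'b \<Rightarrow> real) \<Rightarrow> ('b \<Rightarrow> real) \<Rightarrow> real
   \<Rightarrow> (nat \<Rightarrow> nat \<Rightarrow> 'b) \<Rightarrow> (nat \<Rightarrow> nat \<Rightarrow> 'b) \<Rightarrow> (nat \<Rightarrow> nat \<Rightarrow> 'b) \<Rightarrow> bool" where
  "sonata_run m K W gf ft G \<alpha> x y xh \<longleftrightarrow>
     (\<forall>i<m. x i 0 \<in> K \<and> y i 0 = gf i (x i 0)) \<and>
     (\<forall>\<nu>. \<forall>i<m.
        is_argmin_on
          (\<lambda>z. ft i z (x i \<nu>) + (y i \<nu> - gf i (x i \<nu>)) \<bullet> (z - x i \<nu>) + G z)
          K (xh i \<nu>)) \<and>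
     (\<forall>\<nu>. \<forall>i<m.
        x i (Suc \<nu>) = (\<Sum>j<m. W i j *\<^sub>R (x j \<nu> + \<alpha> *\<^sub>R (xh j \<nu> - x j \<nu>)))) \<and>
     (\<forall>\<nu>. \<forall>i<m.
        y i (Suc \<nu>) = (\<Sum>j<m. W i j *\<^sub>R (y j \<nu> + gf j (x j (Suc \<nu>)) - gf j (x j \<nu>))))"

end

theory Submission
  imports Defs
begin

(* Each agent steps towards the minimiser of a strongly convex surrogate.  If its tracking
   variable y_i were the exact gradient of F, strong convexity of the surrogate, the Lipschitz
   gradients and the quadratic growth of U would make the optimality gap U(x_i) - U* contract
   by a factor 1 - theta alpha; the tracking error only adds a perturbation of order alpha.
   A doubly stochastic W supported on a connected graph contracts the disagreement of any
   family of vectors by a factor rho < 1, so the disagreements of the x- and y-iterates decay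
   geometrically up to perturbations of order alpha^2 times the gap and the disagreements.
   Hence gap + alpha A (y-disagreement) + alpha B (x-disagreement) contracts by a fixed factor
   r < 1 once alpha is small, and every |U(x_i) - U*| is bounded by the gap.
*)

section \<open>Calculus of smooth convex functions\<close>

lemma has_derivative_at_remainder_le:
  assumes "(g has_derivative g') (at x)" "e > 0"
  obtains r where "r > 0" "\<And>v. norm v < r \<Longrightarrow> norm (g (x + v) - g x - g' v) \<le> e * norm v"
proof -
  from assms(1)[unfolded has_derivative_at_alt] assms(2)
  obtain r where "r > 0" "\<And>y. norm (y - x) < r \<Longrightarrow> norm (g y - g x - g' (y - x)) \<le> e * norm (y - x)"
    by blast
  with that[of r] show thesis by (metis add_diff_cancel_left')
qed

lemma convex_segment_mem:
  assumes "convex K" "w \<in> K" "z \<in> K" "0 \<le> t" "t \<le> 1"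
  shows "w + t *\<^sub>R (z - w) \<in> K"
proof -
  have "w + t *\<^sub>R (z - w) = (1 - t) *\<^sub>R w + t *\<^sub>R z" by (simp add: algebra_simps)
  thus ?thesis using assms convexD_alt by fastforce
qed

lemma has_derivative_along_segment:
  fixes g :: "'a::real_normed_vector \<Rightarrow> 'b::real_normed_vector"
  assumes "(g has_derivative g') (at (w + t *\<^sub>R v))"
  shows "((\<lambda>s. g (w + s *\<^sub>R v)) has_derivative (\<lambda>s. g' (s *\<^sub>R v))) (at t)"
proof -
  have "((\<lambda>s. w + s *\<^sub>R v) has_derivative (\<lambda>s. s *\<^sub>R v)) (at t)"
    by (auto intro!: derivative_eq_intros)
  from has_derivative_compose[OF this assms] show ?thesis by simp
qed

lemma has_real_derivative_along_segment:
  fixes g :: "'a::real_inner \<Rightarrow> real"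
  assumes "(g has_derivative (\<lambda>h. gg \<bullet> h)) (at (w + t *\<^sub>R v))"
  shows "((\<lambda>s. g (w + s *\<^sub>R v)) has_real_derivative (gg \<bullet> v)) (at t)"
proof -
  have "(\<lambda>s. gg \<bullet> (s *\<^sub>R v)) = (*) (gg \<bullet> v)" by (auto simp: fun_eq_iff)
  with has_derivative_along_segment[OF assms] show ?thesis by (simp add: has_field_derivative_def)
qed

lemma has_real_derivative_gradient_along_segment:
  fixes gg :: "'a::real_inner \<Rightarrow> 'a"
  assumes "(gg has_derivative H) (at (w + t *\<^sub>R v))"
  shows "((\<lambda>s. gg (w + s *\<^sub>R v) \<bullet> v) has_real_derivative v \<bullet> H v) (at t)"
proof -
  have "((\<lambda>s. gg (w + s *\<^sub>R v) \<bullet> v) has_derivative (\<lambda>r. H (r *\<^sub>R v) \<bullet> v)) (at t)"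
    using has_derivative_inner_left[OF has_derivative_along_segment[OF assms]] by simp
  moreover have "(\<lambda>r. H (r *\<^sub>R v) \<bullet> v) = (*) (v \<bullet> H v)"
    using linear_scale[OF has_derivative_linear[OF assms]] by (auto simp: fun_eq_iff inner_commute)
  ultimately show ?thesis by (simp add: has_field_derivative_def)
qed

lemma has_real_derivative_at_0_ge:
  assumes "(\<phi> has_real_derivative D) (at 0)" and "\<forall>\<^sub>F t in at_right 0. t * c \<le> \<phi> t - \<phi> 0"
  shows "c \<le> D"
proof (rule tendsto_lowerbound)
  have "(\<phi> has_real_derivative D) (at_right 0)"
    using assms(1) by (rule has_field_derivative_at_within)
  thus "((\<lambda>t. (\<phi> t - \<phi> 0) / (t - 0)) \<longlongrightarrow> D) (at_right 0)"
    by (simp only: has_field_derivative_iff)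
  show "\<forall>\<^sub>F t in at_right 0. c \<le> (\<phi> t - \<phi> 0) / (t - 0)"
    using assms(2) eventually_at_right_real[OF zero_less_one]
    by eventually_elim (auto simp: field_simps)
qed simp

lemma has_real_derivative_at_0_le:
  assumes "(\<phi> has_real_derivative D) (at 0)" and "\<forall>\<^sub>F t in at_right 0. \<phi> t - \<phi> 0 \<le> t * c"
  shows "D \<le> c"
proof -
  have D: "((\<lambda>t. - \<phi> t) has_real_derivative - D) (at 0)" using assms(1) by (rule DERIV_minus)
  have "- c \<le> - D"
    by (rule has_real_derivative_at_0_ge[OF D]) (use assms(2) in \<open>auto elim: eventually_mono\<close>)
  thus ?thesis by simp
qed

lemma convex_on_gradient_inequality:
  fixes g :: "'a::real_inner \<Rightarrow> real"
  assumes cv: "convex_on S g" and w: "w \<in> S" and z: "z \<in> S"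
    and d: "(g has_derivative (\<lambda>h. gg \<bullet> h)) (at w)"
  shows "g w + gg \<bullet> (z - w) \<le> g z"
proof -
  have "gg \<bullet> (z - w) \<le> g z - g w"
  proof (rule has_real_derivative_at_0_le)
    show "((\<lambda>t. g (w + t *\<^sub>R (z - w))) has_real_derivative gg \<bullet> (z - w)) (at 0)"
      by (rule has_real_derivative_along_segment) (simp add: d)
    show "\<forall>\<^sub>F t in at_right 0. g (w + t *\<^sub>R (z - w)) - g (w + 0 *\<^sub>R (z - w)) \<le> t * (g z - g w)"
      using eventually_at_right_real[OF zero_less_one]
    proof eventually_elim
      case (elim t)
      have "w + t *\<^sub>R (z - w) = (1 - t) *\<^sub>R w + t *\<^sub>R z" by (simp add: algebra_simps)
      thus ?case using convex_onD[OF cv, of t w z] elim w z by (simp add: algebra_simps)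
    qed
  qed
  thus ?thesis by simp
qed

lemma gradient_monotone_if_convex_on:
  fixes g :: "'a::real_inner \<Rightarrow> real"
  assumes cv: "convex_on S g" and x: "x \<in> S" and z: "z \<in> S"
    and dx: "(g has_derivative (\<lambda>h. gx \<bullet> h)) (at x)"
    and dz: "(g has_derivative (\<lambda>h. gz \<bullet> h)) (at z)"
  shows "0 \<le> (gz - gx) \<bullet> (z - x)"
  using convex_on_gradient_inequality[OF cv x z dx] convex_on_gradient_inequality[OF cv z x dz]
  by (simp add: inner_diff_left inner_diff_right)

lemma strongly_convex_on_gradient_inequality:
  fixes g :: "'a::real_inner \<Rightarrow> real"
  assumes cv: "strongly_convex_on c S g" and w: "w \<in> S" and z: "z \<in> S"
    and d: "(g has_derivative (\<lambda>h. gg \<bullet> h)) (at w)"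
  shows "g w + gg \<bullet> (z - w) + c / 2 * (norm (z - w))\<^sup>2 \<le> g z"
proof -
  have "((\<lambda>z. z \<bullet> z) has_derivative (\<lambda>h. w \<bullet> h + h \<bullet> w)) (at w)"
    by (rule has_derivative_inner[OF has_derivative_ident has_derivative_ident])
  hence "((\<lambda>z. g z - c / 2 * (z \<bullet> z)) has_derivative (\<lambda>h. gg \<bullet> h - c / 2 * (w \<bullet> h + h \<bullet> w))) (at w)"
    by (intro has_derivative_diff d has_derivative_mult_right)
  moreover have "(\<lambda>h. gg \<bullet> h - c / 2 * (w \<bullet> h + h \<bullet> w)) = (\<lambda>h. (gg - c *\<^sub>R w) \<bullet> h)"
    by (auto simp: fun_eq_iff inner_diff_left inner_diff_right inner_commute)
  ultimately have "((\<lambda>z. g z - c / 2 * (norm z)\<^sup>2) has_derivative (\<lambda>h. (gg - c *\<^sub>R w) \<bullet> h)) (at w)"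
    by (simp add: power2_norm_eq_inner)
  from convex_on_gradient_inequality[OF cv[unfolded strongly_convex_on_def] w z this]
  show ?thesis
    by (simp add: power2_norm_eq_inner inner_diff_left inner_diff_right inner_commute algebra_simps)
qed

lemma strongly_convex_on_gradient_monotone:
  fixes g :: "'a::real_inner \<Rightarrow> real"
  assumes cv: "strongly_convex_on c S g" and w: "w \<in> S" and z: "z \<in> S"
    and dw: "(g has_derivative (\<lambda>h. gw \<bullet> h)) (at w)"
    and dz: "(g has_derivative (\<lambda>h. gz \<bullet> h)) (at z)"
  shows "c * (norm (z - w))\<^sup>2 \<le> (gz - gw) \<bullet> (z - w)"
  using strongly_convex_on_gradient_inequality[OF cv w z dw]
    strongly_convex_on_gradient_inequality[OF cv z w dz]
  by (simp add: norm_minus_commute inner_diff_left inner_diff_right)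

lemma descent_lemma:
  fixes g :: "'a::real_inner \<Rightarrow> real"
  assumes K: "convex K" and w: "w \<in> K" and z: "z \<in> K"
    and d: "\<And>u. u \<in> K \<Longrightarrow> (g has_derivative (\<lambda>h. gg u \<bullet> h)) (at u)"
    and lip: "\<And>u u'. u \<in> K \<Longrightarrow> u' \<in> K \<Longrightarrow> norm (gg u - gg u') \<le> c * norm (u - u')"
  shows "g z \<le> g w + gg w \<bullet> (z - w) + c / 2 * (norm (z - w))\<^sup>2"
proof -
  define v where "v = z - w"
  define \<phi> where "\<phi> = (\<lambda>t. g (w + t *\<^sub>R v) - t * (gg w \<bullet> v) - c / 2 * t\<^sup>2 * (norm v)\<^sup>2)"
  have "\<phi> 1 \<le> \<phi> 0"
  proof (rule DERIV_nonpos_imp_nonincreasing[of 0 1 \<phi>])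
    fix t :: real assume t: "0 \<le> t" "t \<le> 1"
    have inK: "w + t *\<^sub>R v \<in> K" using convex_segment_mem[OF K w z t] by (simp add: v_def)
    have D: "(\<phi> has_real_derivative gg (w + t *\<^sub>R v) \<bullet> v - gg w \<bullet> v - c * t * (norm v)\<^sup>2) (at t)"
      unfolding \<phi>_def
      by (rule derivative_eq_intros has_real_derivative_along_segment d inK refl | simp)+
    have "(gg (w + t *\<^sub>R v) - gg w) \<bullet> v \<le> norm (gg (w + t *\<^sub>R v) - gg w) * norm v"
      by (rule norm_cauchy_schwarz)
    also have "\<dots> \<le> c * norm (t *\<^sub>R v) * norm v"
      using lip[OF inK w] by (intro mult_right_mono) auto
    also have "\<dots> = c * t * (norm v)\<^sup>2" using t by (simp add: power2_eq_square)
    finally show "\<exists>y. (\<phi> has_real_derivative y) (at t) \<and> y \<le> 0"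
      using D by (force simp: inner_diff_left)
  qed simp
  thus ?thesis by (simp add: \<phi>_def v_def)
qed

lemma strong_convexity_of_hessian_lower_bound:
  fixes g :: "'a::real_inner \<Rightarrow> real"
  assumes K: "convex K" and w: "w \<in> K" and z: "z \<in> K"
    and d: "\<And>u. u \<in> K \<Longrightarrow> (g has_derivative (\<lambda>h. gg u \<bullet> h)) (at u)"
    and d2: "\<And>u. u \<in> K \<Longrightarrow> (gg has_derivative Hg u) (at u)"
    and lower: "\<And>u h. u \<in> K \<Longrightarrow> c * (norm h)\<^sup>2 \<le> h \<bullet> Hg u h"
  shows "g w + gg w \<bullet> (z - w) + c / 2 * (norm (z - w))\<^sup>2 \<le> g z"
    and "c * (norm (z - w))\<^sup>2 \<le> (gg z - gg w) \<bullet> (z - w)"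
proof -
  define v where "v = z - w"
  have mono: "c * t * (norm v)\<^sup>2 \<le> (gg (w + t *\<^sub>R v) - gg w) \<bullet> v" if t: "0 \<le> t" "t \<le> 1" for t
  proof -
    define \<psi> where "\<psi> = (\<lambda>s. gg (w + s *\<^sub>R v) \<bullet> v - c * s * (norm v)\<^sup>2)"
    have "\<psi> 0 \<le> \<psi> t"
    proof (rule DERIV_nonneg_imp_nondecreasing[of 0 t \<psi>])
      fix s :: real assume s: "0 \<le> s" "s \<le> t"
      have inK: "w + s *\<^sub>R v \<in> K" using convex_segment_mem[OF K w z, of s] s t by (simp add: v_def)
      have D: "((\<lambda>s. gg (w + s *\<^sub>R v) \<bullet> v) has_real_derivative v \<bullet> Hg (w + s *\<^sub>R v) v) (at s)"
        by (rule has_real_derivative_gradient_along_segment[OF d2[OF inK]])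
      have "(\<psi> has_real_derivative v \<bullet> Hg (w + s *\<^sub>R v) v - c * (norm v)\<^sup>2) (at s)"
        unfolding \<psi>_def by (rule derivative_eq_intros D refl | simp)+
      thus "\<exists>y. (\<psi> has_real_derivative y) (at s) \<and> 0 \<le> y"
        using lower[OF inK, of v] by force
    qed (use t in simp)
    thus ?thesis by (simp add: \<psi>_def inner_diff_left)
  qed
  define \<phi> where "\<phi> = (\<lambda>t. g (w + t *\<^sub>R v) - t * (gg w \<bullet> v) - c / 2 * t\<^sup>2 * (norm v)\<^sup>2)"
  have "\<phi> 0 \<le> \<phi> 1"
  proof (rule DERIV_nonneg_imp_nondecreasing[of 0 1 \<phi>])
    fix t :: real assume t: "0 \<le> t" "t \<le> 1"
    have inK: "w + t *\<^sub>R v \<in> K" using convex_segment_mem[OF K w z t] by (simp add: v_def)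
    have "(\<phi> has_real_derivative gg (w + t *\<^sub>R v) \<bullet> v - gg w \<bullet> v - c * t * (norm v)\<^sup>2) (at t)"
      unfolding \<phi>_def
      by (rule derivative_eq_intros has_real_derivative_along_segment d inK refl | simp)+
    thus "\<exists>y. (\<phi> has_real_derivative y) (at t) \<and> 0 \<le> y"
      using mono[OF t] by (force simp: inner_diff_left)
  qed simp
  thus "g w + gg w \<bullet> (z - w) + c / 2 * (norm (z - w))\<^sup>2 \<le> g z" by (simp add: \<phi>_def v_def)
  show "c * (norm (z - w))\<^sup>2 \<le> (gg z - gg w) \<bullet> (z - w)" using mono[of 1] by (simp add: v_def)
qed

lemma norm_scaleR_add_lt:
  assumes "0 \<le> a" "a \<le> s" "0 \<le> b" "b \<le> s" "s * (norm h + norm k) < r"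
  shows "norm (a *\<^sub>R h + b *\<^sub>R k) < r"
proof -
  have "norm (a *\<^sub>R h + b *\<^sub>R k) \<le> a * norm h + b * norm k"
    using assms norm_triangle_ineq[of "a *\<^sub>R h" "b *\<^sub>R k"] by simp
  also have "\<dots> \<le> s * norm h + s * norm k" using assms by (intro add_mono mult_right_mono) auto
  finally show ?thesis using assms(5) by (simp add: algebra_simps)
qed

lemma second_difference_mean_value:
  fixes f :: "'a::real_inner \<Rightarrow> real" and gf :: "'a \<Rightarrow> 'a"
  assumes d: "\<And>z. z \<in> ball x r \<Longrightarrow> (f has_derivative (\<lambda>h. gf z \<bullet> h)) (at z)"
    and s: "0 < s" "s * (norm h + norm k) < r"
  obtains \<tau> where "0 < \<tau>" "\<tau> < s"
    "f (x + s *\<^sub>R h + s *\<^sub>R k) - f (x + s *\<^sub>R k) - f (x + s *\<^sub>R h) + f x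
       = s * ((gf (x + s *\<^sub>R h + \<tau> *\<^sub>R k) - gf (x + \<tau> *\<^sub>R k)) \<bullet> k)"
proof -
  define g where "g = (\<lambda>t. f (x + s *\<^sub>R h + t *\<^sub>R k) - f (x + t *\<^sub>R k))"
  have inb: "x + (a *\<^sub>R h + b *\<^sub>R k) \<in> ball x r" if "0 \<le> a" "a \<le> s" "0 \<le> b" "b \<le> s" for a b
  proof -
    have "\<And>v. dist x (x + v) = norm v" by (simp add: dist_norm)
    thus ?thesis using norm_scaleR_add_lt[OF that s(2)] by (simp only: mem_ball)
  qed
  have "\<exists>\<tau>. 0 < \<tau> \<and> \<tau> < s \<and> g s - g 0 = (s - 0) * ((gf (x + s *\<^sub>R h + \<tau> *\<^sub>R k) - gf (x + \<tau> *\<^sub>R k)) \<bullet> k)"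
  proof (rule MVT2[OF s(1)])
    fix t :: real assume t: "0 \<le> t" "t \<le> s"
    have b1: "(x + s *\<^sub>R h) + t *\<^sub>R k \<in> ball x r" using inb[of s t] t s by (simp add: add.assoc)
    have b2: "x + t *\<^sub>R k \<in> ball x r" using inb[of 0 t] t s by simp
    have D1: "((\<lambda>t. f ((x + s *\<^sub>R h) + t *\<^sub>R k)) has_real_derivative (gf (x + s *\<^sub>R h + t *\<^sub>R k) \<bullet> k)) (at t)"
      by (rule has_real_derivative_along_segment) (use d[OF b1] in simp)
    have D2: "((\<lambda>t. f (x + t *\<^sub>R k)) has_real_derivative (gf (x + t *\<^sub>R k) \<bullet> k)) (at t)"
      by (rule has_real_derivative_along_segment) (use d[OF b2] in simp)
    show "(g has_real_derivative ((gf (x + s *\<^sub>R h + t *\<^sub>R k) - gf (x + t *\<^sub>R k)) \<bullet> k)) (at t)"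
      unfolding g_def using DERIV_diff[OF D1 D2] by (simp add: inner_diff_left add.assoc)
  qed
  with that show thesis by (auto simp: g_def)
qed

lemma second_difference_approx:
  fixes f :: "'a::real_inner \<Rightarrow> real" and gf :: "'a \<Rightarrow> 'a"
  assumes d: "\<And>z. z \<in> ball x r \<Longrightarrow> (f has_derivative (\<lambda>h. gf z \<bullet> h)) (at z)"
    and lin: "linear H"
    and app: "\<And>v. norm v < r \<Longrightarrow> norm (gf (x + v) - gf x - H v) \<le> e * norm v"
    and s: "0 < s" "s * (norm h + norm k) < r" and e: "e \<ge> 0"
  shows "\<bar>(f (x + s *\<^sub>R h + s *\<^sub>R k) - f (x + s *\<^sub>R k) - f (x + s *\<^sub>R h) + f x) - s\<^sup>2 * (H h \<bullet> k)\<bar>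
          \<le> e * s\<^sup>2 * ((norm h + 2 * norm k) * norm k)"
proof -
  obtain \<tau> where tau: "0 < \<tau>" "\<tau> < s"
    and mv: "f (x + s *\<^sub>R h + s *\<^sub>R k) - f (x + s *\<^sub>R k) - f (x + s *\<^sub>R h) + f x
               = s * ((gf (x + s *\<^sub>R h + \<tau> *\<^sub>R k) - gf (x + \<tau> *\<^sub>R k)) \<bullet> k)"
    using second_difference_mean_value[OF d s] by blast
  define v1 where "v1 = s *\<^sub>R h + \<tau> *\<^sub>R k"
  define v2 where "v2 = \<tau> *\<^sub>R k"
  define R1 where "R1 = gf (x + v1) - gf x - H v1"
  define R2 where "R2 = gf (x + v2) - gf x - H v2"
  have "norm R1 \<le> e * norm v1"
    using app norm_scaleR_add_lt[of s s \<tau> h k r] tau s by (simp add: R1_def v1_def)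
  also have "\<dots> \<le> e * (s * norm h + s * norm k)"
    using norm_triangle_ineq[of "s *\<^sub>R h" "\<tau> *\<^sub>R k"] mult_right_mono[of \<tau> s "norm k"] tau s(1) e
    by (intro mult_left_mono) (simp_all add: v1_def)
  finally have R1: "norm R1 \<le> e * (s * norm h + s * norm k)" .
  have "norm v2 < r" using norm_scaleR_add_lt[of 0 s \<tau> h k r] tau s by (simp add: v2_def)
  hence "norm R2 \<le> e * norm v2" using app by (simp add: R2_def)
  also have "\<dots> \<le> e * (s * norm k)"
    using mult_right_mono[of \<tau> s "norm k"] tau e by (intro mult_left_mono) (simp_all add: v2_def)
  finally have R2: "norm R2 \<le> e * (s * norm k)" .
  have "gf (x + s *\<^sub>R h + \<tau> *\<^sub>R k) - gf (x + \<tau> *\<^sub>R k) = s *\<^sub>R H h + (R1 - R2)"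
    using lin by (simp add: R1_def R2_def v1_def v2_def linear_add linear_scale algebra_simps)
  hence ip: "(gf (x + s *\<^sub>R h + \<tau> *\<^sub>R k) - gf (x + \<tau> *\<^sub>R k)) \<bullet> k = s * (H h \<bullet> k) + (R1 - R2) \<bullet> k"
    by (simp add: inner_add_left)
  have "f (x + s *\<^sub>R h + s *\<^sub>R k) - f (x + s *\<^sub>R k) - f (x + s *\<^sub>R h) + f x - s\<^sup>2 * (H h \<bullet> k)
      = s * ((R1 - R2) \<bullet> k)"
    unfolding mv ip by (simp add: power2_eq_square algebra_simps)
  moreover have "\<bar>(R1 - R2) \<bullet> k\<bar> \<le> (norm R1 + norm R2) * norm k"
    using Cauchy_Schwarz_ineq2[of "R1 - R2" k] norm_triangle_ineq4[of R1 R2]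
    by (meson mult_right_mono norm_ge_zero order_trans)
  moreover have "(norm R1 + norm R2) * norm k \<le> e * s * ((norm h + 2 * norm k) * norm k)"
    using R1 R2 by (intro order_trans[OF mult_right_mono[OF add_mono[OF R1 R2]]]) (auto simp: algebra_simps)
  ultimately show ?thesis
    using s(1) by (simp add: abs_mult power2_eq_square mult_left_mono mult.assoc)
qed

lemma hessian_asymmetry_le:
  fixes f :: "'a::real_inner \<Rightarrow> real" and gf :: "'a \<Rightarrow> 'a"
  assumes O: "open S" "x \<in> S"
    and d: "\<And>z. z \<in> S \<Longrightarrow> (f has_derivative (\<lambda>h. gf z \<bullet> h)) (at z)"
    and d2: "(gf has_derivative H) (at x)" and e: "e > 0"
  shows "\<bar>H h \<bullet> k - H k \<bullet> h\<bar> \<le> e * ((norm h + 2 * norm k) * norm k + (norm k + 2 * norm h) * norm h)"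
    (is "_ \<le> e * ?C")
proof -
  have lin: "linear H" using d2 has_derivative_linear by blast
  obtain r1 where r1: "r1 > 0" "ball x r1 \<subseteq> S" using O open_contains_ball by blast
  obtain r0 where r0: "r0 > 0" "\<And>v. norm v < r0 \<Longrightarrow> norm (gf (x + v) - gf x - H v) \<le> e * norm v"
    using has_derivative_at_remainder_le[OF d2 e] by blast
  define r where "r = min r0 r1"
  have r: "r > 0" using r0 r1 by (simp add: r_def)
  have app: "\<And>v. norm v < r \<Longrightarrow> norm (gf (x + v) - gf x - H v) \<le> e * norm v"
    using r0 by (simp add: r_def)
  have dd: "\<And>z. z \<in> ball x r \<Longrightarrow> (f has_derivative (\<lambda>h. gf z \<bullet> h)) (at z)"
    using d r1 by (auto simp: r_def)
  define s where "s = r / (2 * (norm h + norm k + 1))"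
  have den: "0 < 2 * (norm h + norm k + 1)" by (smt (verit) norm_ge_zero)
  have s0: "0 < s" using r den by (simp add: s_def)
  have "s * (norm h + norm k) \<le> s * (norm h + norm k + 1)" using s0 by simp
  also have "\<dots> = r / 2" using den by (simp add: s_def field_simps)
  also have "\<dots> < r" using r by simp
  finally have sr: "s * (norm h + norm k) < r" .
  have sr': "s * (norm k + norm h) < r" using sr by (simp add: add.commute)
  let ?D = "f (x + s *\<^sub>R h + s *\<^sub>R k) - f (x + s *\<^sub>R k) - f (x + s *\<^sub>R h) + f x"
  have A: "\<bar>?D - s\<^sup>2 * (H h \<bullet> k)\<bar> \<le> e * s\<^sup>2 * ((norm h + 2 * norm k) * norm k)"
    by (rule second_difference_approx[OF dd lin app s0 sr]) (use e in auto)
  have B0: "\<bar>(f (x + s *\<^sub>R k + s *\<^sub>R h) - f (x + s *\<^sub>R h) - f (x + s *\<^sub>R k) + f x) - s\<^sup>2 * (H k \<bullet> h)\<bar>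
       \<le> e * s\<^sup>2 * ((norm k + 2 * norm h) * norm h)"
    by (rule second_difference_approx[OF dd lin app s0 sr']) (use e in auto)
  have xx: "x + s *\<^sub>R k + s *\<^sub>R h = x + s *\<^sub>R h + s *\<^sub>R k" by (simp add: algebra_simps)
  have B: "\<bar>?D - s\<^sup>2 * (H k \<bullet> h)\<bar> \<le> e * s\<^sup>2 * ((norm k + 2 * norm h) * norm h)"
    using B0 unfolding xx by linarith
  have "s\<^sup>2 * \<bar>H h \<bullet> k - H k \<bullet> h\<bar> = \<bar>s\<^sup>2 * (H h \<bullet> k) - s\<^sup>2 * (H k \<bullet> h)\<bar>"
    by (simp only: right_diff_distrib[symmetric] abs_mult abs_power2)
  also have "\<dots> \<le> e * s\<^sup>2 * ((norm h + 2 * norm k) * norm k) + e * s\<^sup>2 * ((norm k + 2 * norm h) * norm h)"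
    using A B by linarith
  also have "\<dots> = s\<^sup>2 * (e * ?C)" by (simp add: algebra_simps)
  finally show ?thesis using s0 by simp
qed

lemma hessian_symmetric:
  fixes f :: "'a::real_inner \<Rightarrow> real" and gf :: "'a \<Rightarrow> 'a"
  assumes O: "open S" "x \<in> S"
    and d: "\<And>z. z \<in> S \<Longrightarrow> (f has_derivative (\<lambda>h. gf z \<bullet> h)) (at z)"
    and d2: "(gf has_derivative H) (at x)"
  shows "H h \<bullet> k = H k \<bullet> h"
proof -
  define C where "C = (norm h + 2 * norm k) * norm k + (norm k + 2 * norm h) * norm h"
  have C: "0 \<le> C" by (simp add: C_def)
  have "\<bar>H h \<bullet> k - H k \<bullet> h\<bar> \<le> 0"
  proof (rule field_le_epsilon)
    fix e :: real assume e: "0 < e"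
    hence "0 < e / (C + 1)" using C by simp
    from hessian_asymmetry_le[OF O d d2 this, of h k]
    have "\<bar>H h \<bullet> k - H k \<bullet> h\<bar> \<le> e / (C + 1) * C" by (simp add: C_def)
    also have "\<dots> \<le> e" using e C by (simp add: field_simps)
    finally show "\<bar>H h \<bullet> k - H k \<bullet> h\<bar> \<le> 0 + e" by simp
  qed
  thus ?thesis by simp
qed

lemma hessian_nonneg_if_convex_on:
  fixes g :: "'a::real_inner \<Rightarrow> real"
  assumes cv: "convex_on S g" and S: "open S" and x: "x \<in> S"
    and d: "\<And>z. z \<in> S \<Longrightarrow> (g has_derivative (\<lambda>h. gg z \<bullet> h)) (at z)"
    and d2: "(gg has_derivative H) (at x)"
  shows "0 \<le> h \<bullet> H h"
proof (rule has_real_derivative_at_0_ge)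
  show "((\<lambda>t. gg (x + t *\<^sub>R h) \<bullet> h) has_real_derivative h \<bullet> H h) (at 0)"
    by (rule has_real_derivative_gradient_along_segment) (simp add: d2)
  have "((\<lambda>t. x + t *\<^sub>R h) \<longlongrightarrow> x + 0 *\<^sub>R h) (at_right 0)" by (intro tendsto_intros)
  hence "\<forall>\<^sub>F t in at_right 0. x + t *\<^sub>R h \<in> S" using S x by (auto dest: topological_tendstoD)
  thus "\<forall>\<^sub>F t in at_right 0. t * 0 \<le> gg (x + t *\<^sub>R h) \<bullet> h - gg (x + 0 *\<^sub>R h) \<bullet> h"
    using eventually_at_right_real[OF zero_less_one]
  proof eventually_elim
    case (elim t)
    have "0 \<le> (gg (x + t *\<^sub>R h) - gg x) \<bullet> ((x + t *\<^sub>R h) - x)"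
      using gradient_monotone_if_convex_on[OF cv x elim(1) d[OF x] d[OF elim(1)]] .
    hence "0 \<le> t * ((gg (x + t *\<^sub>R h) - gg x) \<bullet> h)" by simp
    thus ?case using elim(2) by (simp add: zero_le_mult_iff inner_diff_left)
  qed
qed

lemma norm_le_of_symmetric_form_bound:
  fixes H :: "'a::real_inner \<Rightarrow> 'a"
  assumes lin: "linear H" and sym: "\<And>h k. H h \<bullet> k = H k \<bullet> h"
    and lo: "\<And>h. 0 \<le> h \<bullet> H h" and up: "\<And>h. h \<bullet> H h \<le> c * (norm h)\<^sup>2"
  shows "norm (H h) \<le> c * norm h"
proof (cases "h = 0")
  case True thus ?thesis using lin by (simp add: linear_0)
next
  case h: False
  have "0 \<le> c * (norm h)\<^sup>2" by (rule order_trans[OF lo up])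
  hence c: "0 \<le> c" using h by (simp add: zero_le_mult_iff)
  show ?thesis
  proof (cases "H h = 0")
    case True thus ?thesis using c by simp
  next
    case False
    define k where "k = (norm h / norm (H h)) *\<^sub>R H h"
    have nk: "norm k = norm h" using False by (simp add: k_def)
    have Hk: "H h \<bullet> k = norm h * norm (H h)"
      using False by (simp add: k_def power2_norm_eq_inner[symmetric] power2_eq_square)
    have "4 * (H h \<bullet> k) = (h + k) \<bullet> H (h + k) - (h - k) \<bullet> H (h - k)"
      using lin sym[of h k] by (simp add: linear_add linear_diff inner_add_left inner_add_right
          inner_diff_left inner_diff_right inner_commute algebra_simps)
    also have "\<dots> \<le> c * (norm (h + k))\<^sup>2" using up[of "h + k"] lo[of "h - k"] by linarith
    also have "\<dots> \<le> c * (2 * norm h)\<^sup>2"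
      using c norm_triangle_ineq[of h k] nk by (intro mult_left_mono power_mono) auto
    finally have "norm h * norm (H h) \<le> norm h * (c * norm h)"
      using Hk by (simp add: power2_eq_square algebra_simps)
    thus ?thesis using h by simp
  qed
qed

lemma lipschitz_of_derivative_bound:
  fixes g :: "'a::euclidean_space \<Rightarrow> 'b::real_normed_vector"
  assumes K: "convex K" and x: "x \<in> K" and y: "y \<in> K"
    and d: "\<And>u. u \<in> K \<Longrightarrow> (g has_derivative H u) (at u)"
    and b: "\<And>u h. u \<in> K \<Longrightarrow> norm (H u h) \<le> c * norm h"
  shows "norm (g x - g y) \<le> c * norm (x - y)"
proof (rule differentiable_bound[OF K _ _ x y])
  fix u assume u: "u \<in> K"
  show "(g has_derivative H u) (at u within K)" using d[OF u] by (rule has_derivative_at_withinI)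
  show "onorm (H u) \<le> c" using b[OF u] by (intro onorm_le) auto
qed

lemma minimizer_variational_inequality:
  fixes g G :: "'a::real_inner \<Rightarrow> real"
  assumes K: "convex K" and p: "p \<in> K" and z: "z \<in> K"
    and desc: "\<And>a b. a \<in> K \<Longrightarrow> b \<in> K \<Longrightarrow> g b \<le> g a + gg a \<bullet> (b - a) + c / 2 * (norm (b - a))\<^sup>2"
    and Gc: "convex_on K G"
    and min: "\<And>w. w \<in> K \<Longrightarrow> g p + G p \<le> g w + G w"
  shows "0 \<le> gg p \<bullet> (z - p) + G z - G p"
proof (rule tendsto_lowerbound)
  let ?A = "gg p \<bullet> (z - p) + G z - G p"
  let ?B = "c / 2 * (norm (z - p))\<^sup>2"
  have "((\<lambda>t. ?A + t * ?B) \<longlongrightarrow> ?A + 0 * ?B) (at_right 0)" by (intro tendsto_intros)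
  thus "((\<lambda>t. ?A + t * ?B) \<longlongrightarrow> ?A) (at_right 0)" by simp
  show "\<forall>\<^sub>F t in at_right 0. 0 \<le> ?A + t * ?B"
    using eventually_at_right_real[OF zero_less_one]
  proof eventually_elim
    case (elim t)
    define q where "q = p + t *\<^sub>R (z - p)"
    have q: "q \<in> K" unfolding q_def using convex_segment_mem[OF K p z] elim by simp
    have "g p + G p \<le> g q + G q" by (rule min[OF q])
    also have "g q \<le> g p + gg p \<bullet> (q - p) + c / 2 * (norm (q - p))\<^sup>2" by (rule desc[OF p q])
    also have "q = (1 - t) *\<^sub>R p + t *\<^sub>R z" by (simp add: q_def algebra_simps)
    hence "G q \<le> (1 - t) * G p + t * G z"
      using convex_onD[OF Gc, of t p z] elim p z by simp
    finally have "0 \<le> gg p \<bullet> (q - p) + c / 2 * (norm (q - p))\<^sup>2 + t * (G z - G p)"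
      by (simp add: algebra_simps)
    also have "gg p \<bullet> (q - p) = t * (gg p \<bullet> (z - p))" by (simp add: q_def)
    also have "norm (q - p) = t * norm (z - p)" using elim by (simp add: q_def)
    finally have "0 \<le> t * (?A + t * ?B)" by (simp add: power_mult_distrib power2_eq_square algebra_simps)
    thus ?case using elim by (simp add: zero_le_mult_iff)
  qed
qed simp

section \<open>Averages and consensus\<close>

lemma two_mult_le_weighted_squares:
  fixes x y \<eta> :: real
  assumes "\<eta> > 0"
  shows "2 * (x * y) \<le> \<eta> * x\<^sup>2 + (1 / \<eta>) * y\<^sup>2"
proof -
  have "0 \<le> (\<eta> * x - y)\<^sup>2 / \<eta>" using assms by simp
  also have "\<dots> = \<eta> * x\<^sup>2 + (1 / \<eta>) * y\<^sup>2 - 2 * (x * y)"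
    using assms by (simp add: power2_diff field_simps power2_eq_square)
  finally show ?thesis by simp
qed

lemma square_add_le: "(x + y)\<^sup>2 \<le> 2 * (x\<^sup>2 + y\<^sup>2)" for x y :: real
  using two_mult_le_weighted_squares[of 1 x y] by (simp add: power2_sum)

lemma norm_add_square_le_weighted:
  fixes a b :: "'a::real_inner"
  assumes "\<eta> > 0"
  shows "(norm (a + b))\<^sup>2 \<le> (1 + \<eta>) * (norm a)\<^sup>2 + (1 + 1 / \<eta>) * (norm b)\<^sup>2"
proof -
  have "(norm (a + b))\<^sup>2 = (norm a)\<^sup>2 + 2 * (a \<bullet> b) + (norm b)\<^sup>2"
    by (simp add: power2_norm_eq_inner inner_add_left inner_add_right inner_commute)
  moreover have "a \<bullet> b \<le> norm a * norm b" by (rule norm_cauchy_schwarz)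
  moreover have "2 * (norm a * norm b) \<le> \<eta> * (norm a)\<^sup>2 + (1 / \<eta>) * (norm b)\<^sup>2"
    by (rule two_mult_le_weighted_squares[OF assms])
  ultimately show ?thesis by (simp add: algebra_simps)
qed

lemma norm_add3_square_le:
  fixes a b c :: "'a::real_normed_vector"
  shows "(norm (a + b + c))\<^sup>2 \<le> 3 * ((norm a)\<^sup>2 + (norm b)\<^sup>2 + (norm c)\<^sup>2)"
proof -
  have "norm (a + b + c) \<le> norm a + norm b + norm c"
    by (meson add_mono norm_triangle_ineq order_trans order_refl)
  hence "(norm (a + b + c))\<^sup>2 \<le> (norm a + norm b + norm c)\<^sup>2" by (simp add: power_mono)
  also have "\<dots> \<le> 3 * ((norm a)\<^sup>2 + (norm b)\<^sup>2 + (norm c)\<^sup>2)"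
  proof -
    have "0 \<le> (norm a - norm b)\<^sup>2 + (norm b - norm c)\<^sup>2 + (norm a - norm c)\<^sup>2" by simp
    thus ?thesis by (simp add: power2_eq_square algebra_simps)
  qed
  finally show ?thesis .
qed

lemma square_sum_le_card_mult_sum_squares:
  fixes t :: "nat \<Rightarrow> real"
  shows "(\<Sum>i<m. t i)\<^sup>2 \<le> real m * (\<Sum>i<m. (t i)\<^sup>2)"
  using Cauchy_Schwarz_ineq_sum[of "\<lambda>_. 1" t "{..<m}"] by simp

lemma sum_norm_add_square_le_weighted:
  fixes a b :: "nat \<Rightarrow> 'a::real_inner"
  assumes "\<eta> > 0"
  shows "(\<Sum>j<m. (norm (a j + b j))\<^sup>2)
           \<le> (1 + \<eta>) * (\<Sum>j<m. (norm (a j))\<^sup>2) + (1 + 1 / \<eta>) * (\<Sum>j<m. (norm (b j))\<^sup>2)"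
proof -
  have "(\<Sum>j<m. (norm (a j + b j))\<^sup>2)
          \<le> (\<Sum>j<m. (1 + \<eta>) * (norm (a j))\<^sup>2 + (1 + 1 / \<eta>) * (norm (b j))\<^sup>2)"
    by (intro sum_mono norm_add_square_le_weighted assms)
  also have "\<dots> = (1 + \<eta>) * (\<Sum>j<m. (norm (a j))\<^sup>2) + (1 + 1 / \<eta>) * (\<Sum>j<m. (norm (b j))\<^sup>2)"
    by (simp add: sum.distrib sum_distrib_left)
  finally show ?thesis .
qed

definition avg :: "nat \<Rightarrow> (nat \<Rightarrow> 'a::real_vector) \<Rightarrow> 'a" where
  "avg m v = (1 / real m) *\<^sub>R (\<Sum>j<m. v j)"

definition disagreement :: "nat \<Rightarrow> (nat \<Rightarrow> 'a::real_inner) \<Rightarrow> real" where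
  "disagreement m v = (\<Sum>j<m. (norm (v j - avg m v))\<^sup>2)"

lemma avg_cong: "(\<And>j. j < m \<Longrightarrow> v j = w j) \<Longrightarrow> avg m v = avg m w"
  by (simp add: avg_def)

lemma disagreement_cong: "(\<And>j. j < m \<Longrightarrow> v j = w j) \<Longrightarrow> disagreement m v = disagreement m w"
  by (simp add: disagreement_def avg_cong[of m v w])

lemma disagreement_nonneg: "0 \<le> disagreement m v"
  unfolding disagreement_def by (intro sum_nonneg) auto

lemma sum_eq_card_scaleR_avg: "m \<ge> 1 \<Longrightarrow> (\<Sum>j<m. v j) = real m *\<^sub>R avg m v"
  by (simp add: avg_def)

lemma sum_diff_avg_eq_0: "m \<ge> 1 \<Longrightarrow> (\<Sum>j<m. v j - avg m v) = 0"
  by (simp add: sum_subtractf avg_def sum_constant_scaleR)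

lemma avg_add: "avg m (\<lambda>j. v j + w j) = avg m v + avg m w"
  by (simp add: avg_def sum.distrib scaleR_add_right)

lemma avg_scaleR: "avg m (\<lambda>j. c *\<^sub>R v j) = c *\<^sub>R avg m v"
  by (simp add: avg_def scaleR_sum_right)

lemma avg_mem_convex:
  assumes "convex K" "m \<ge> 1" "\<And>j. j < m \<Longrightarrow> v j \<in> K"
  shows "avg m v \<in> K"
proof -
  have "(\<Sum>j\<in>{..<m}. (1 / real m) *\<^sub>R v j) \<in> K"
    by (rule convex_sum[OF _ assms(1)]) (use assms in auto)
  thus ?thesis by (simp add: avg_def scaleR_sum_right)
qed

lemma disagreement_eq:
  fixes d :: "nat \<Rightarrow> 'a::real_inner"
  assumes "m \<ge> 1"
  shows "disagreement m d = (\<Sum>j<m. (norm (d j))\<^sup>2) - real m * (norm (avg m d))\<^sup>2"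
proof -
  have "disagreement m d = (\<Sum>j<m. (norm (d j))\<^sup>2 - 2 * (avg m d \<bullet> d j) + (norm (avg m d))\<^sup>2)"
    unfolding disagreement_def
    by (intro sum.cong refl) (simp add: power2_norm_eq_inner inner_diff_left inner_diff_right inner_commute)
  also have "\<dots> = (\<Sum>j<m. (norm (d j))\<^sup>2) - 2 * (avg m d \<bullet> (\<Sum>j<m. d j)) + real m * (norm (avg m d))\<^sup>2"
    by (simp add: sum.distrib sum_subtractf inner_sum_right sum_distrib_left)
  also have "\<dots> = (\<Sum>j<m. (norm (d j))\<^sup>2) - real m * (norm (avg m d))\<^sup>2"
    using assms by (simp add: sum_eq_card_scaleR_avg power2_norm_eq_inner)
  finally show ?thesis .
qed

lemma disagreement_le_sum_squares:
  fixes d :: "nat \<Rightarrow> 'a::real_inner"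
  shows "m \<ge> 1 \<Longrightarrow> disagreement m d \<le> (\<Sum>j<m. (norm (d j))\<^sup>2)"
  by (simp add: disagreement_eq)

lemma card_mult_norm_avg_square_le:
  fixes d :: "nat \<Rightarrow> 'a::real_inner"
  shows "m \<ge> 1 \<Longrightarrow> real m * (norm (avg m d))\<^sup>2 \<le> (\<Sum>j<m. (norm (d j))\<^sup>2)"
  using disagreement_eq[of m d] disagreement_nonneg[of m d] by linarith

lemma disagreement_add_le:
  fixes a b :: "nat \<Rightarrow> 'a::real_inner"
  assumes "\<eta> > 0" "m \<ge> 1"
  shows "disagreement m (\<lambda>j. a j + b j) \<le> (1 + \<eta>) * disagreement m a + (1 + 1 / \<eta>) * (\<Sum>j<m. (norm (b j))\<^sup>2)"
proof -
  have "disagreement m (\<lambda>j. a j + b j) = (\<Sum>j<m. (norm ((a j - avg m a) + (b j - avg m b)))\<^sup>2)"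
    by (simp add: disagreement_def avg_add algebra_simps)
  also have "\<dots> \<le> (1 + \<eta>) * disagreement m a + (1 + 1 / \<eta>) * disagreement m b"
    unfolding disagreement_def by (rule sum_norm_add_square_le_weighted[OF assms(1)])
  also have "disagreement m b \<le> (\<Sum>j<m. (norm (b j))\<^sup>2)"
    by (rule disagreement_le_sum_squares[OF assms(2)])
  finally show ?thesis using assms(1) by (simp add: mult_left_mono)
qed

lemma weight_matrix_okD:
  assumes "weight_matrix_ok m E W"
  shows "\<And>i j. i < m \<Longrightarrow> j < m \<Longrightarrow> 0 \<le> W i j"
    and "\<And>i. i < m \<Longrightarrow> (\<Sum>j<m. W i j) = 1"
    and "\<And>j. j < m \<Longrightarrow> (\<Sum>i<m. W i j) = 1"
    and "\<And>i. i < m \<Longrightarrow> 0 < W i i"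
    and "\<And>i j. i < m \<Longrightarrow> j < m \<Longrightarrow> (i, j) \<in> E \<Longrightarrow> i \<noteq> j \<Longrightarrow> 0 < W i j"
  using assms unfolding weight_matrix_ok_def by auto

lemma sum_mix_eq_sum:
  fixes z :: "nat \<Rightarrow> 'a::real_vector"
  assumes "weight_matrix_ok m E W"
  shows "(\<Sum>i<m. \<Sum>j<m. W i j *\<^sub>R z j) = (\<Sum>j<m. z j)"
proof -
  have "(\<Sum>i<m. \<Sum>j<m. W i j *\<^sub>R z j) = (\<Sum>j<m. (\<Sum>i<m. W i j) *\<^sub>R z j)"
    by (subst sum.swap) (simp add: scaleR_sum_left)
  also have "\<dots> = (\<Sum>j<m. z j)" using weight_matrix_okD(3)[OF assms] by simp
  finally show ?thesis .
qed

lemma avg_mix_eq_avg: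
  "weight_matrix_ok m E W \<Longrightarrow> avg m (\<lambda>i. \<Sum>j<m. W i j *\<^sub>R z j) = avg m z"
  unfolding avg_def by (simp add: sum_mix_eq_sum)

lemma norm_sum_scaleR_square:
  fixes w :: "nat \<Rightarrow> real" and v :: "nat \<Rightarrow> 'a::real_inner"
  shows "(norm (\<Sum>j<m. w j *\<^sub>R v j))\<^sup>2 = (\<Sum>j<m. \<Sum>k<m. w j * w k * (v j \<bullet> v k))"
proof -
  have "(norm (\<Sum>j<m. w j *\<^sub>R v j))\<^sup>2 = (\<Sum>j<m. w j *\<^sub>R v j) \<bullet> (\<Sum>k<m. w k *\<^sub>R v k)"
    by (simp only: power2_norm_eq_inner)
  also have "\<dots> = (\<Sum>j<m. \<Sum>k<m. (w j *\<^sub>R v j) \<bullet> (w k *\<^sub>R v k))"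
    by (simp only: inner_sum_left inner_sum_right) (rule sum.swap)
  finally show ?thesis by (simp add: mult_ac)
qed

lemma norm_diff_square_eq:
  fixes a b :: "'a::real_inner"
  shows "(norm (a - b))\<^sup>2 = (norm a)\<^sup>2 + (norm b)\<^sup>2 - 2 * (a \<bullet> b)"
  by (simp add: power2_norm_eq_inner inner_diff_left inner_diff_right inner_commute)

lemma norm_convex_combination_square:
  fixes w :: "nat \<Rightarrow> real" and v :: "nat \<Rightarrow> 'a::real_inner"
  assumes w1: "(\<Sum>j<m. w j) = 1"
  shows "(norm (\<Sum>j<m. w j *\<^sub>R v j))\<^sup>2 =
           (\<Sum>j<m. w j * (norm (v j))\<^sup>2) - (1/2) * (\<Sum>j<m. \<Sum>k<m. w j * w k * (norm (v j - v k))\<^sup>2)"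
proof -
  have first: "(\<Sum>j<m. \<Sum>k<m. w j * w k * (norm (v j))\<^sup>2) = (\<Sum>j<m. w j * (norm (v j))\<^sup>2)"
    using w1 by (simp add: sum_distrib_left[symmetric] sum_distrib_right[symmetric] mult_ac)
  have second: "(\<Sum>j<m. \<Sum>k<m. w j * w k * (norm (v k))\<^sup>2) = (\<Sum>j<m. w j * (norm (v j))\<^sup>2)"
    by (subst sum.swap) (use first in \<open>simp add: mult_ac\<close>)
  have "(\<Sum>j<m. \<Sum>k<m. w j * w k * (norm (v j - v k))\<^sup>2)
      = (\<Sum>j<m. \<Sum>k<m. w j * w k * (norm (v j))\<^sup>2) + (\<Sum>j<m. \<Sum>k<m. w j * w k * (norm (v k))\<^sup>2)
        - 2 * (\<Sum>j<m. \<Sum>k<m. w j * w k * (v j \<bullet> v k))"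
    by (simp add: norm_diff_square_eq algebra_simps sum.distrib sum_subtractf sum_distrib_left)
  thus ?thesis using first second norm_sum_scaleR_square[of w v m] by linarith
qed

lemma sum_pairwise_norm_diff_square:
  fixes v :: "nat \<Rightarrow> 'a::real_inner"
  assumes "(\<Sum>j<m. v j) = 0"
  shows "(\<Sum>j<m. \<Sum>k<m. (norm (v j - v k))\<^sup>2) = 2 * real m * (\<Sum>j<m. (norm (v j))\<^sup>2)"
proof -
  have "(\<Sum>j<m. \<Sum>k<m. v j \<bullet> v k) = 0"
    using assms by (simp add: inner_sum_right[symmetric])
  hence "(\<Sum>j<m. \<Sum>k<m. (norm (v j - v k))\<^sup>2)
      = (\<Sum>j<m. \<Sum>k<m. (norm (v j))\<^sup>2) + (\<Sum>j<m. \<Sum>k<m. (norm (v k))\<^sup>2)"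
    by (simp add: norm_diff_square_eq sum.distrib sum_subtractf sum_distrib_left[symmetric])
  thus ?thesis by (simp add: sum_distrib_left mult_ac)
qed

lemma norm_diff_square_le_edge_energy:
  fixes E :: "(nat \<times> nat) set"
  assumes "(j, k) \<in> E\<^sup>*" "finite E"
  obtains c where "c \<ge> 0"
    "\<And>v::nat \<Rightarrow> 'a::real_inner. (norm (v j - v k))\<^sup>2 \<le> c * (\<Sum>(a, b)\<in>E. (norm (v a - v b))\<^sup>2)"
proof -
  have "\<exists>c\<ge>0. \<forall>v::nat \<Rightarrow> 'a. (norm (v j - v k))\<^sup>2 \<le> c * (\<Sum>(a, b)\<in>E. (norm (v a - v b))\<^sup>2)"
    using assms(1)
  proof (induction rule: rtrancl_induct)
    case base
    show ?case by (intro exI[of _ 0]) simp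
  next
    case (step k l)
    then obtain c where c: "c \<ge> 0"
      "\<And>v::nat \<Rightarrow> 'a. (norm (v j - v k))\<^sup>2 \<le> c * (\<Sum>(a, b)\<in>E. (norm (v a - v b))\<^sup>2)"
      by blast
    show ?case
    proof (intro exI[of _ "2 * c + 2"] conjI allI)
      fix v :: "nat \<Rightarrow> 'a"
      let ?S = "\<Sum>(a, b)\<in>E. (norm (v a - v b))\<^sup>2"
      have kl: "(norm (v k - v l))\<^sup>2 \<le> ?S"
        using member_le_sum[of "(k, l)" E "\<lambda>(a, b). (norm (v a - v b))\<^sup>2"] step assms(2) by auto
      have "(norm (v j - v l))\<^sup>2 \<le> 2 * (norm (v j - v k))\<^sup>2 + 2 * (norm (v k - v l))\<^sup>2"
        using norm_add_square_le_weighted[of 1 "v j - v k" "v k - v l"] by simp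
      also have "\<dots> \<le> 2 * (c * ?S) + 2 * ?S" using c(2)[of v] kl by linarith
      finally show "(norm (v j - v l))\<^sup>2 \<le> (2 * c + 2) * ?S" by (simp add: algebra_simps)
    qed (use c in simp)
  qed
  with that show thesis by blast
qed

lemma pairwise_energy_le_edge_energy:
  assumes "connected_undirected_graph m E"
  obtains C where "C \<ge> 0"
    "\<And>v::nat \<Rightarrow> 'a::real_inner.
       (\<Sum>j<m. \<Sum>k<m. (norm (v j - v k))\<^sup>2) \<le> C * (\<Sum>(a, b)\<in>E. (norm (v a - v b))\<^sup>2)"
proof -
  have finE: "finite E"
    using assms finite_subset unfolding connected_undirected_graph_def by blast
  have "\<forall>p\<in>{..<m} \<times> {..<m}. \<exists>c\<ge>0. \<forall>v::nat \<Rightarrow> 'a.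
          (norm (v (fst p) - v (snd p)))\<^sup>2 \<le> c * (\<Sum>(a, b)\<in>E. (norm (v a - v b))\<^sup>2)"
  proof
    fix p assume "p \<in> {..<m} \<times> {..<m}"
    hence "(fst p, snd p) \<in> E\<^sup>*" using assms unfolding connected_undirected_graph_def by auto
    from norm_diff_square_le_edge_energy[OF this finE] show "\<exists>c\<ge>0. \<forall>v::nat \<Rightarrow> 'a.
          (norm (v (fst p) - v (snd p)))\<^sup>2 \<le> c * (\<Sum>(a, b)\<in>E. (norm (v a - v b))\<^sup>2)"
      by metis
  qed
  then obtain c where c: "\<And>p. p \<in> {..<m} \<times> {..<m} \<Longrightarrow> c p \<ge> 0 \<and> (\<forall>v::nat \<Rightarrow> 'a.
          (norm (v (fst p) - v (snd p)))\<^sup>2 \<le> c p * (\<Sum>(a, b)\<in>E. (norm (v a - v b))\<^sup>2))"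
    by metis
  show thesis
  proof (rule that[of "\<Sum>j<m. \<Sum>k<m. c (j, k)"])
    show "0 \<le> (\<Sum>j<m. \<Sum>k<m. c (j, k))" using c by (intro sum_nonneg) auto
    fix v :: "nat \<Rightarrow> 'a"
    have "(\<Sum>j<m. \<Sum>k<m. (norm (v j - v k))\<^sup>2)
            \<le> (\<Sum>j<m. \<Sum>k<m. c (j, k) * (\<Sum>(a, b)\<in>E. (norm (v a - v b))\<^sup>2))"
      using c by (intro sum_mono) (metis fst_conv snd_conv lessThan_iff mem_Sigma_iff)
    thus "(\<Sum>j<m. \<Sum>k<m. (norm (v j - v k))\<^sup>2) \<le> (\<Sum>j<m. \<Sum>k<m. c (j, k)) * (\<Sum>(a, b)\<in>E. (norm (v a - v b))\<^sup>2)"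
      by (simp add: sum_distrib_right)
  qed
qed

lemma mixing_energy_identity:
  fixes v :: "nat \<Rightarrow> 'a::real_inner"
  assumes W: "weight_matrix_ok m E W"
  shows "(\<Sum>i<m. (norm (\<Sum>j<m. W i j *\<^sub>R v j))\<^sup>2)
           = (\<Sum>j<m. (norm (v j))\<^sup>2) - (1/2) * (\<Sum>i<m. \<Sum>j<m. \<Sum>k<m. W i j * W i k * (norm (v j - v k))\<^sup>2)"
proof -
  have "(\<Sum>i<m. (norm (\<Sum>j<m. W i j *\<^sub>R v j))\<^sup>2)
      = (\<Sum>i<m. (\<Sum>j<m. W i j * (norm (v j))\<^sup>2) - (1/2) * (\<Sum>j<m. \<Sum>k<m. W i j * W i k * (norm (v j - v k))\<^sup>2))"
    by (rule sum.cong[OF refl], rule norm_convex_combination_square, rule weight_matrix_okD(2)[OF W]) simp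
  also have "\<dots> = (\<Sum>i<m. \<Sum>j<m. W i j * (norm (v j))\<^sup>2)
      - (1/2) * (\<Sum>i<m. \<Sum>j<m. \<Sum>k<m. W i j * W i k * (norm (v j - v k))\<^sup>2)"
    by (simp add: sum_subtractf sum_distrib_left)
  also have "(\<Sum>i<m. \<Sum>j<m. W i j * (norm (v j))\<^sup>2) = (\<Sum>j<m. (norm (v j))\<^sup>2)"
    using weight_matrix_okD(3)[OF W] by (subst sum.swap) (simp add: sum_distrib_right[symmetric])
  finally show ?thesis .
qed

text \<open>Along an edge (a, b) the term i = j = a of the mixing energy contributes
  W a a * W a b * |v a - v b|^2, and both weights are positive.\<close>

lemma mixing_energy_ge_edge_energy:
  assumes G: "connected_undirected_graph m E" and W: "weight_matrix_ok m E W"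
  obtains \<delta> where "\<delta> > 0"
    "\<And>v::nat \<Rightarrow> 'a::real_inner. \<delta> * (\<Sum>(a, b)\<in>E. (norm (v a - v b))\<^sup>2)
       \<le> (\<Sum>i<m. \<Sum>j<m. \<Sum>k<m. W i j * W i k * (norm (v j - v k))\<^sup>2)"
proof -
  have Esub: "E \<subseteq> {..<m} \<times> {..<m}" and noloop: "\<And>i. (i, i) \<notin> E"
    using G unfolding connected_undirected_graph_def by auto
  have finE: "finite E" using Esub finite_subset by blast
  define \<delta> where "\<delta> = Min (insert 1 ((\<lambda>(a, b). W a a * W a b) ` E))"
  have edge_pos: "0 < W a a * W a b" if "(a, b) \<in> E" for a b
    using that Esub noloop weight_matrix_okD(4,5)[OF W] by (metis mem_Sigma_iff lessThan_iff mult_pos_pos subsetD)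
  have "\<delta> > 0" unfolding \<delta>_def using finE edge_pos by (subst Min_gr_iff) auto
  moreover have "\<delta> * (\<Sum>(a, b)\<in>E. (norm (v a - v b))\<^sup>2)
       \<le> (\<Sum>i<m. \<Sum>j<m. \<Sum>k<m. W i j * W i k * (norm (v j - v k))\<^sup>2)" for v :: "nat \<Rightarrow> 'a"
  proof -
    define X where "X i j k = W i j * W i k * (norm (v j - v k))\<^sup>2" for i j k
    have X0: "0 \<le> X i j k" if "i < m" "j < m" "k < m" for i j k
      unfolding X_def using weight_matrix_okD(1)[OF W] that by simp
    have "\<delta> * (\<Sum>(a, b)\<in>E. (norm (v a - v b))\<^sup>2) = (\<Sum>(a, b)\<in>E. \<delta> * (norm (v a - v b))\<^sup>2)"
      by (simp add: sum_distrib_left case_prod_beta)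
    also have "\<dots> \<le> (\<Sum>(a, b)\<in>E. X a a b)"
    proof (rule sum_mono)
      fix p assume p: "p \<in> E"
      obtain a b where ab: "p = (a, b)" by force
      have "\<delta> \<le> W a a * W a b" unfolding \<delta>_def using finE p ab by (intro Min_le) auto
      thus "(case p of (a, b) \<Rightarrow> \<delta> * (norm (v a - v b))\<^sup>2) \<le> (case p of (a, b) \<Rightarrow> X a a b)"
        unfolding X_def ab by (simp add: mult_right_mono)
    qed
    also have "\<dots> \<le> (\<Sum>(j, k)\<in>{..<m} \<times> {..<m}. X j j k)"
      by (rule sum_mono2) (use Esub X0 in auto)
    also have "\<dots> = (\<Sum>j<m. \<Sum>k<m. X j j k)" by (simp add: sum.cartesian_product)
    also have "\<dots> \<le> (\<Sum>j<m. \<Sum>i<m. \<Sum>k<m. X i j k)"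
    proof (rule sum_mono)
      fix j assume j: "j \<in> {..<m}"
      show "(\<Sum>k<m. X j j k) \<le> (\<Sum>i<m. \<Sum>k<m. X i j k)"
        using member_le_sum[of j "{..<m}" "\<lambda>i. \<Sum>k<m. X i j k"] j X0 by (auto intro: sum_nonneg)
    qed
    also have "\<dots> = (\<Sum>i<m. \<Sum>j<m. \<Sum>k<m. X i j k)" by (rule sum.swap)
    finally show ?thesis by (simp add: X_def)
  qed
  ultimately show thesis using that by blast
qed

lemma mixing_contracts_mean_zero:
  assumes m: "m \<ge> 1" and G: "connected_undirected_graph m E" and W: "weight_matrix_ok m E W"
  obtains \<rho> where "0 < \<rho>" "\<rho> < 1"
    "\<And>v::nat \<Rightarrow> 'a::real_inner. (\<Sum>j<m. v j) = 0 \<Longrightarrow>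
       (\<Sum>i<m. (norm (\<Sum>j<m. W i j *\<^sub>R v j))\<^sup>2) \<le> \<rho> * (\<Sum>j<m. (norm (v j))\<^sup>2)"
proof -
  obtain C where C: "C \<ge> 0" "\<And>v::nat \<Rightarrow> 'a.
       (\<Sum>j<m. \<Sum>k<m. (norm (v j - v k))\<^sup>2) \<le> C * (\<Sum>(a, b)\<in>E. (norm (v a - v b))\<^sup>2)"
    using pairwise_energy_le_edge_energy[OF G] by blast
  obtain \<delta> where \<delta>: "\<delta> > 0" "\<And>v::nat \<Rightarrow> 'a. \<delta> * (\<Sum>(a, b)\<in>E. (norm (v a - v b))\<^sup>2)
       \<le> (\<Sum>i<m. \<Sum>j<m. \<Sum>k<m. W i j * W i k * (norm (v j - v k))\<^sup>2)"
    using mixing_energy_ge_edge_energy[OF G W] by blast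
  define \<kappa> where "\<kappa> = \<delta> * real m / (C + 1)"
  have \<kappa>: "\<kappa> > 0" unfolding \<kappa>_def using \<delta> m C by simp
  show thesis
  proof (rule that[of "max (1/2) (1 - \<kappa>)"])
    show "0 < max (1/2) (1 - \<kappa>)" "max (1/2) (1 - \<kappa>) < 1" using \<kappa> by auto
    fix v :: "nat \<Rightarrow> 'a" assume v0: "(\<Sum>j<m. v j) = 0"
    let ?N = "\<Sum>j<m. (norm (v j))\<^sup>2" and ?S = "\<Sum>(a, b)\<in>E. (norm (v a - v b))\<^sup>2"
    have S0: "0 \<le> ?S" by (intro sum_nonneg) auto
    have "2 * real m * ?N \<le> C * ?S" using C(2)[of v] sum_pairwise_norm_diff_square[OF v0] by simp
    also have "\<dots> \<le> (C + 1) * ?S" using S0 by (simp add: algebra_simps)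
    finally have "2 * real m / (C + 1) * ?N \<le> ?S" using C(1) by (simp add: field_simps)
    hence "\<delta> * (2 * real m / (C + 1) * ?N) \<le> \<delta> * ?S" using \<delta>(1) by (intro mult_left_mono) auto
    moreover have "(1 - \<kappa>) * ?N = ?N - (1/2) * (\<delta> * (2 * real m / (C + 1) * ?N))"
      by (simp add: \<kappa>_def algebra_simps)
    ultimately have "(\<Sum>i<m. (norm (\<Sum>j<m. W i j *\<^sub>R v j))\<^sup>2) \<le> (1 - \<kappa>) * ?N"
      using mixing_energy_identity[OF W, of v] \<delta>(2)[of v] by linarith
    also have "\<dots> \<le> max (1/2) (1 - \<kappa>) * ?N" by (intro mult_right_mono) (auto intro: sum_nonneg)
    finally show "(\<Sum>i<m. (norm (\<Sum>j<m. W i j *\<^sub>R v j))\<^sup>2) \<le> max (1/2) (1 - \<kappa>) * ?N" .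
  qed
qed

lemma mixing_contracts_disagreement:
  assumes m: "m \<ge> 1" and G: "connected_undirected_graph m E" and W: "weight_matrix_ok m E W"
  obtains \<rho> where "0 < \<rho>" "\<rho> < 1"
    "\<And>z::nat \<Rightarrow> 'a::real_inner. disagreement m (\<lambda>i. \<Sum>j<m. W i j *\<^sub>R z j) \<le> \<rho> * disagreement m z"
proof -
  obtain \<rho> where \<rho>: "0 < \<rho>" "\<rho> < 1" "\<And>v::nat \<Rightarrow> 'a. (\<Sum>j<m. v j) = 0 \<Longrightarrow>
       (\<Sum>i<m. (norm (\<Sum>j<m. W i j *\<^sub>R v j))\<^sup>2) \<le> \<rho> * (\<Sum>j<m. (norm (v j))\<^sup>2)"
    using mixing_contracts_mean_zero[OF m G W] by blast
  have "disagreement m (\<lambda>i. \<Sum>j<m. W i j *\<^sub>R z j) \<le> \<rho> * disagreement m z" for z :: "nat \<Rightarrow> 'a"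
  proof -
    define v where "v j = z j - avg m z" for j
    have "(\<Sum>j<m. W i j *\<^sub>R z j) - avg m z = (\<Sum>j<m. W i j *\<^sub>R v j)" if "i < m" for i
      using weight_matrix_okD(2)[OF W that]
      by (simp add: v_def scaleR_diff_right sum_subtractf scaleR_sum_left[symmetric])
    hence "disagreement m (\<lambda>i. \<Sum>j<m. W i j *\<^sub>R z j) = (\<Sum>i<m. (norm (\<Sum>j<m. W i j *\<^sub>R v j))\<^sup>2)"
      unfolding disagreement_def avg_mix_eq_avg[OF W] by simp
    also have "\<dots> \<le> \<rho> * (\<Sum>j<m. (norm (v j))\<^sup>2)"
      by (rule \<rho>(3)) (simp add: v_def sum_diff_avg_eq_0[OF m])
    finally show ?thesis by (simp add: v_def disagreement_def)
  qed
  with \<rho>(1,2) that show thesis by blast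
qed

section \<open>Scalar recursions\<close>

lemma quadratic_le_imp_linear_bound:
  fixes X Y e c A :: real
  assumes "X \<ge> 0" "Y \<ge> 0" "e \<ge> 0" "c > 0" "A \<ge> 0"
    and quadratic: "c * X\<^sup>2 \<le> A * X * Y + e * X + e * Y"
  shows "X \<le> (1 + (A + 2) / c) * (Y + e)"
proof (cases "X \<le> Y + e")
  case True
  have "0 \<le> (A + 2) / c * (Y + e)" using assms by simp
  thus ?thesis using True by (simp add: algebra_simps)
next
  case False
  define s where "s = Y + e"
  have s0: "s \<ge> 0" and Xs: "s < X" using assms False by (auto simp: s_def)
  have "A * X * Y \<le> A * X * s" using assms by (intro mult_left_mono) (auto simp: s_def)
  moreover have "e * X \<le> s * X" using assms by (intro mult_right_mono) (auto simp: s_def)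
  moreover have "e * Y \<le> s * X"
  proof -
    have "e * Y \<le> s * s" using assms unfolding s_def by (smt (verit) mult_left_mono mult_right_mono mult_nonneg_nonneg)
    also have "\<dots> \<le> s * X" using s0 Xs by (intro mult_left_mono) auto
    finally show ?thesis .
  qed
  ultimately have "c * X * X \<le> ((A + 2) * s) * X"
    using quadratic by (simp add: power2_eq_square algebra_simps)
  hence "c * X \<le> (A + 2) * s" using Xs s0 by simp
  hence "X \<le> (A + 2) / c * s" using assms(4) by (simp add: field_simps)
  also have "\<dots> \<le> (1 + (A + 2) / c) * s" using s0 by (simp add: algebra_simps)
  finally show ?thesis by (simp add: s_def)
qed

text \<open>Averaging the two bounds with weights c / (Q + c) and Q / (Q + c) cancels the d terms.\<close>

lemma contraction_of_two_bounds:
  fixes a a' d e \<alpha> Q c c' :: real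
  assumes "0 \<le> Q" "0 < c" "0 \<le> c'" "0 \<le> \<alpha>" "0 \<le> e"
    and coarse: "a' \<le> (1 - \<alpha>) * a + \<alpha> * Q * (d + e)"
    and fine: "a' \<le> a - \<alpha> * c * d + \<alpha> * c' * e"
  shows "a' \<le> (1 - c / (Q + c) * \<alpha>) * a + \<alpha> * (Q + c') * e"
proof -
  define \<theta> where "\<theta> = c / (Q + c)"
  have \<theta>: "0 < \<theta>" "\<theta> \<le> 1" and \<theta>Q: "\<theta> * Q = (1 - \<theta>) * c"
    using assms(1,2) by (auto simp: \<theta>_def field_simps)
  have "a' = \<theta> * a' + (1 - \<theta>) * a'" by (simp add: algebra_simps)
  also have "\<dots> \<le> \<theta> * ((1 - \<alpha>) * a + \<alpha> * Q * (d + e)) + (1 - \<theta>) * (a - \<alpha> * c * d + \<alpha> * c' * e)"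
    using coarse fine \<theta> by (intro add_mono mult_left_mono) auto
  also have "\<dots> = (1 - \<theta> * \<alpha>) * a + \<alpha> * (\<theta> * Q + (1 - \<theta>) * c') * e
      + \<alpha> * d * (\<theta> * Q - (1 - \<theta>) * c)"
    by (simp add: algebra_simps)
  also have "\<dots> = (1 - \<theta> * \<alpha>) * a + \<alpha> * (\<theta> * Q + (1 - \<theta>) * c') * e"
    using \<theta>Q by simp
  also have "\<dots> \<le> (1 - \<theta> * \<alpha>) * a + \<alpha> * (Q + c') * e"
  proof -
    have "\<theta> * Q + (1 - \<theta>) * c' \<le> Q + c'"
      using \<theta> assms(1,3) by (smt (verit) mult_left_le_one_le mult_nonneg_nonneg)
    thus ?thesis using assms(4,5) by (intro add_left_mono mult_right_mono mult_left_mono) auto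
  qed
  finally show ?thesis by (simp add: \<theta>_def)
qed

lemma lyapunov_one_step:
  fixes \<theta> a p \<rho> \<alpha> A B :: real
  defines "r \<equiv> max (1 - \<theta> * \<alpha> / 2) ((1 + \<rho>) / 2)"
  assumes \<theta>: "0 < \<theta>" "\<theta> \<le> 1" and AB: "0 \<le> A" "0 \<le> B"
    and weights: "a + 1 \<le> A * (1 - \<rho>) / 2" "a + A * p + 1 \<le> B * (1 - \<rho>) / 2"
    and \<alpha>: "0 < \<alpha>" "\<alpha>\<^sup>2 * b * (A + B) \<le> \<theta> / 2"
    and nonneg: "0 \<le> u" "0 \<le> ex" "0 \<le> ey"
    and hu: "u' \<le> (1 - \<theta> * \<alpha>) * u + \<alpha> * a * (ey + ex)"
    and hx: "ex' \<le> \<rho> * ex + \<alpha>\<^sup>2 * b * (u + ey + ex)"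
    and hy: "ey' \<le> \<rho> * ey + p * ex + \<alpha>\<^sup>2 * b * (u + ey + ex)"
  shows "u' + \<alpha> * A * ey' + \<alpha> * B * ex' \<le> r * (u + \<alpha> * A * ey + \<alpha> * B * ex)"
proof -
  define \<epsilon> where "\<epsilon> = \<alpha>\<^sup>2 * b * (A + B)"
  have r: "1 - \<theta> * \<alpha> / 2 \<le> r" "(1 + \<rho>) / 2 \<le> r" by (auto simp: r_def)
  have "\<alpha> * A * ey' \<le> \<alpha> * A * (\<rho> * ey + p * ex + \<alpha>\<^sup>2 * b * (u + ey + ex))"
    using hy AB \<alpha> by (intro mult_left_mono) auto
  moreover have "\<alpha> * B * ex' \<le> \<alpha> * B * (\<rho> * ex + \<alpha>\<^sup>2 * b * (u + ey + ex))"
    using hx AB \<alpha> by (intro mult_left_mono) auto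
  ultimately have "u' + \<alpha> * A * ey' + \<alpha> * B * ex'
      \<le> (1 - \<theta> * \<alpha> + \<alpha> * \<epsilon>) * u + \<alpha> * (a + A * \<rho> + \<epsilon>) * ey + \<alpha> * (a + A * p + B * \<rho> + \<epsilon>) * ex"
    using hu by (simp add: \<epsilon>_def algebra_simps power2_eq_square)
  also have "\<dots> \<le> r * u + r * (\<alpha> * A) * ey + r * (\<alpha> * B) * ex"
  proof (intro add_mono mult_right_mono)
    have "\<alpha> * \<epsilon> \<le> \<alpha> * (\<theta> / 2)" using \<alpha> unfolding \<epsilon>_def by (intro mult_left_mono) auto
    thus "1 - \<theta> * \<alpha> + \<alpha> * \<epsilon> \<le> r" using r by (simp add: algebra_simps)
    have "a + A * \<rho> + \<epsilon> \<le> A * ((1 + \<rho>) / 2)"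
      using weights(1) \<alpha> \<theta> by (simp add: \<epsilon>_def algebra_simps)
    also have "\<dots> \<le> A * r" using AB r by (intro mult_left_mono)
    finally have "\<alpha> * (a + A * \<rho> + \<epsilon>) \<le> \<alpha> * (A * r)" using \<alpha> by (intro mult_left_mono) auto
    thus "\<alpha> * (a + A * \<rho> + \<epsilon>) \<le> r * (\<alpha> * A)" by (simp add: algebra_simps)
    have "a + A * p + B * \<rho> + \<epsilon> \<le> B * ((1 + \<rho>) / 2)"
      using weights(2) \<alpha> \<theta> by (simp add: \<epsilon>_def algebra_simps)
    also have "\<dots> \<le> B * r" using AB r by (intro mult_left_mono)
    finally have "\<alpha> * (a + A * p + B * \<rho> + \<epsilon>) \<le> \<alpha> * (B * r)" using \<alpha> by (intro mult_left_mono) auto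
    thus "\<alpha> * (a + A * p + B * \<rho> + \<epsilon>) \<le> r * (\<alpha> * B)" by (simp add: algebra_simps)
  qed (use nonneg in auto)
  finally show ?thesis by (simp add: algebra_simps)
qed

lemma coupled_recursions_linear_rate:
  fixes \<theta> a b p \<rho> :: real
  assumes \<theta>: "0 < \<theta>" "\<theta> \<le> 1" and coeffs: "0 \<le> a" "0 \<le> b" "0 \<le> p" "0 \<le> \<rho>" "\<rho> < 1"
  obtains \<alpha>max where "0 < \<alpha>max"
    "\<And>\<alpha> u ex ey :: nat \<Rightarrow> real. 0 < \<alpha> \<Longrightarrow> \<alpha> \<le> \<alpha>max \<Longrightarrow>
       (\<And>n. 0 \<le> u n) \<Longrightarrow> (\<And>n. 0 \<le> ex n) \<Longrightarrow> (\<And>n. 0 \<le> ey n) \<Longrightarrow>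
       (\<And>n. u (Suc n) \<le> (1 - \<theta> * \<alpha>) * u n + \<alpha> * a * (ey n + ex n)) \<Longrightarrow>
       (\<And>n. ex (Suc n) \<le> \<rho> * ex n + \<alpha>\<^sup>2 * b * (u n + ey n + ex n)) \<Longrightarrow>
       (\<And>n. ey (Suc n) \<le> \<rho> * ey n + p * ex n + \<alpha>\<^sup>2 * b * (u n + ey n + ex n)) \<Longrightarrow>
       \<exists>C r. 0 < r \<and> r < 1 \<and> (\<forall>n. u n \<le> C * r ^ n)"
proof -
  define A where "A = 2 * (a + 1) / (1 - \<rho>)"
  define B where "B = 2 * (a + A * p + 1) / (1 - \<rho>)"
  have AB: "0 \<le> A" "0 \<le> B" "0 \<le> b * (A + B)" using coeffs by (auto simp: A_def B_def)
  have weights: "a + 1 \<le> A * (1 - \<rho>) / 2" "a + A * p + 1 \<le> B * (1 - \<rho>) / 2"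
    using coeffs by (simp_all add: A_def B_def)
  show thesis
  proof (rule that[of "min 1 (\<theta> / 2 / (b * (A + B) + 1))"])
    show "0 < min 1 (\<theta> / 2 / (b * (A + B) + 1))" using \<theta> AB by simp
    fix \<alpha> :: real and u ex ey :: "nat \<Rightarrow> real"
    assume \<alpha>: "0 < \<alpha>" "\<alpha> \<le> min 1 (\<theta> / 2 / (b * (A + B) + 1))"
      and nonneg: "\<And>n. 0 \<le> u n" "\<And>n. 0 \<le> ex n" "\<And>n. 0 \<le> ey n"
      and hu: "\<And>n. u (Suc n) \<le> (1 - \<theta> * \<alpha>) * u n + \<alpha> * a * (ey n + ex n)"
      and hx: "\<And>n. ex (Suc n) \<le> \<rho> * ex n + \<alpha>\<^sup>2 * b * (u n + ey n + ex n)"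
      and hy: "\<And>n. ey (Suc n) \<le> \<rho> * ey n + p * ex n + \<alpha>\<^sup>2 * b * (u n + ey n + ex n)"
    define r where "r = max (1 - \<theta> * \<alpha> / 2) ((1 + \<rho>) / 2)"
    have r: "0 < r" "r < 1" using \<theta> \<alpha> coeffs by (auto simp: r_def less_max_iff_disj)
    have small: "\<alpha>\<^sup>2 * b * (A + B) \<le> \<theta> / 2"
    proof -
      have "\<alpha> * \<alpha> \<le> \<alpha>" using \<alpha> by (intro mult_left_le_one_le) auto
      hence "\<alpha> * \<alpha> * (b * (A + B)) \<le> \<alpha> * (b * (A + B))" using AB by (intro mult_right_mono)
      hence "\<alpha>\<^sup>2 * b * (A + B) \<le> \<alpha> * (b * (A + B))" by (simp add: power2_eq_square mult.assoc)
      also have "\<dots> \<le> \<theta> / 2 / (b * (A + B) + 1) * (b * (A + B))" using \<alpha> AB by (intro mult_right_mono) auto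
      also have "\<dots> \<le> \<theta> / 2" using \<theta> AB by (simp add: field_simps)
      finally show ?thesis .
    qed
    define V where "V n = u n + \<alpha> * A * ey n + \<alpha> * B * ex n" for n
    have step: "V (Suc n) \<le> r * V n" for n
      unfolding V_def r_def by (rule lyapunov_one_step[OF \<theta> AB(1,2) weights \<alpha>(1) small nonneg hu hx hy])
    have decay: "V n \<le> V 0 * r ^ n" for n
    proof (induction n)
      case (Suc n)
      have "V (Suc n) \<le> r * (V 0 * r ^ n)" using step[of n] Suc r by (smt (verit) mult_left_mono)
      thus ?case by (simp add: algebra_simps)
    qed simp
    have "u n \<le> V n" for n using nonneg AB \<alpha> by (simp add: V_def)
    with decay r show "\<exists>C r. 0 < r \<and> r < 1 \<and> (\<forall>n. u n \<le> C * r ^ n)"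
      by (meson order_trans)
  qed
qed

section \<open>The distributed problem\<close>

locale sonata_problem =
  fixes m :: nat
    and K Oset :: "'a::euclidean_space set"
    and f :: "nat \<Rightarrow> 'a \<Rightarrow> real"
    and gf :: "nat \<Rightarrow> 'a \<Rightarrow> 'a"
    and Hf :: "nat \<Rightarrow> 'a \<Rightarrow> 'a \<Rightarrow> 'a"
    and G :: "'a \<Rightarrow> real"
    and \<mu> L :: real
    and xstar :: 'a
    and E :: "(nat \<times> nat) set"
    and W :: "nat \<Rightarrow> nat \<Rightarrow> real"
    and ft :: "nat \<Rightarrow> 'a \<Rightarrow> 'a \<Rightarrow> real"
    and gft :: "nat \<Rightarrow> 'a \<Rightarrow> 'a \<Rightarrow> 'a"
    and Lt mut :: "nat \<Rightarrow> real"
    and \<rho> :: real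
  assumes m_pos: "m \<ge> 1"
    and K_ne: "K \<noteq> {}" and K_convex: "convex K"
    and O_open: "open Oset" and K_sub_O: "K \<subseteq> Oset"
    and f_grad: "\<And>i x. i < m \<Longrightarrow> x \<in> Oset \<Longrightarrow> (f i has_derivative (\<lambda>h. gf i x \<bullet> h)) (at x)"
    and f_hess: "\<And>i x. i < m \<Longrightarrow> x \<in> Oset \<Longrightarrow> (gf i has_derivative Hf i x) (at x)"
    and f_convex: "\<And>i. i < m \<Longrightarrow> convex_on Oset (f i)"
    and mu_pos: "\<mu> > 0"
    and F_hess_bounds: "\<And>x h. x \<in> K \<Longrightarrow>
          \<mu> * (norm h)\<^sup>2 \<le> h \<bullet> ((1 / real m) *\<^sub>R (\<Sum>i<m. Hf i x h)) \<and>
          h \<bullet> ((1 / real m) *\<^sub>R (\<Sum>i<m. Hf i x h)) \<le> L * (norm h)\<^sup>2"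
    and G_convex: "convex_on K G"
    and xstar_in: "xstar \<in> K"
    and xstar_min: "\<And>x. x \<in> K \<Longrightarrow>
          (1 / real m) * (\<Sum>i<m. f i xstar) + G xstar \<le> (1 / real m) * (\<Sum>i<m. f i x) + G x"
    and W_ok: "weight_matrix_ok m E W"
    and rho: "0 < \<rho>" "\<rho> < 1"
    and mixing: "\<And>z::nat \<Rightarrow> 'a. disagreement m (\<lambda>i. \<Sum>j<m. W i j *\<^sub>R z j) \<le> \<rho> * disagreement m z"
    and ft_grad: "\<And>i x y. i < m \<Longrightarrow> x \<in> Oset \<Longrightarrow> y \<in> Oset \<Longrightarrow>
          ((\<lambda>z. ft i z y) has_derivative (\<lambda>h. gft i x y \<bullet> h)) (at x)"
    and ft_consistent: "\<And>i x. i < m \<Longrightarrow> x \<in> K \<Longrightarrow> gft i x x = gf i x"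
    and ft_lipschitz: "\<And>i x. i < m \<Longrightarrow> x \<in> K \<Longrightarrow> lipschitz_on (Lt i) K (\<lambda>z. gft i z x)"
    and mut_pos: "\<And>i. i < m \<Longrightarrow> mut i > 0"
    and ft_strongly_convex: "\<And>i x. i < m \<Longrightarrow> x \<in> K \<Longrightarrow> strongly_convex_on (mut i) K (\<lambda>z. ft i z x)"
begin

definition F where "F x = (1 / real m) * (\<Sum>i<m. f i x)"
definition gF where "gF x = (1 / real m) *\<^sub>R (\<Sum>i<m. gf i x)"
definition HF where "HF x h = (1 / real m) *\<^sub>R (\<Sum>i<m. Hf i x h)"
definition U where "U x = F x + G x"

lemma m_gt0: "real m > 0" using m_pos by simp

lemma F_has_derivative:
  assumes "x \<in> Oset"
  shows "(F has_derivative (\<lambda>h. gF x \<bullet> h)) (at x)"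
proof -
  have "((\<lambda>x. \<Sum>i<m. f i x) has_derivative (\<lambda>h. \<Sum>i<m. gf i x \<bullet> h)) (at x)"
    by (rule has_derivative_sum) (use f_grad assms in auto)
  from has_derivative_mult_right[OF this, of "1 / real m"] show ?thesis
    by (simp add: F_def[abs_def] gF_def inner_sum_left)
qed

lemma gF_has_derivative: "x \<in> Oset \<Longrightarrow> (gF has_derivative HF x) (at x)"
  unfolding gF_def[abs_def] HF_def[abs_def]
  by (auto intro!: derivative_eq_intros f_hess)

lemma HF_bounds: "x \<in> K \<Longrightarrow> \<mu> * (norm h)\<^sup>2 \<le> h \<bullet> HF x h \<and> h \<bullet> HF x h \<le> L * (norm h)\<^sup>2"
  using F_hess_bounds by (simp add: HF_def)

lemma L_pos: "L > 0"
proof -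
  obtain x where x: "x \<in> K" using K_ne by blast
  obtain b :: 'a where "b \<in> Basis" using nonempty_Basis by blast
  hence "norm b = 1" by simp
  thus ?thesis using HF_bounds[OF x, of b] mu_pos by simp
qed

definition Lg where "Lg = real m * L"

lemma Lg_pos: "Lg > 0" using m_gt0 L_pos by (simp add: Lg_def)

text \<open>Convexity makes every Hessian of an f i positive semidefinite, hence bounded by
  m times the Hessian of F: this is where the Lipschitz constant Lg = m L comes from.\<close>

lemma norm_Hf_le:
  assumes i: "i < m" and x: "x \<in> K"
  shows "norm (Hf i x h) \<le> Lg * norm h"
proof -
  have xO: "x \<in> Oset" using x K_sub_O by auto
  have nonneg: "0 \<le> k \<bullet> Hf j x k" if "j < m" for j k
    by (rule hessian_nonneg_if_convex_on[OF f_convex[OF that] O_open xO f_grad[OF that] f_hess[OF that xO]])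
  have "k \<bullet> Hf i x k \<le> Lg * (norm k)\<^sup>2" for k
  proof -
    have "k \<bullet> Hf i x k \<le> (\<Sum>j<m. k \<bullet> Hf j x k)"
      using member_le_sum[of i "{..<m}" "\<lambda>j. k \<bullet> Hf j x k"] nonneg i by auto
    also have "\<dots> = real m * (k \<bullet> HF x k)" using m_gt0 by (simp add: HF_def inner_sum_right)
    also have "\<dots> \<le> real m * (L * (norm k)\<^sup>2)" using HF_bounds[OF x, of k] m_gt0 by simp
    finally show ?thesis by (simp add: Lg_def)
  qed
  moreover have "Hf i x h \<bullet> k = Hf i x k \<bullet> h" for h k
    by (rule hessian_symmetric[OF O_open xO f_grad f_hess[OF i xO]]) (use i in auto)
  ultimately show ?thesis
    using norm_le_of_symmetric_form_bound[OF has_derivative_linear[OF f_hess[OF i xO]]] nonneg[OF i]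
    by blast
qed

lemma gf_lipschitz: "i < m \<Longrightarrow> x \<in> K \<Longrightarrow> y \<in> K \<Longrightarrow> norm (gf i x - gf i y) \<le> Lg * norm (x - y)"
  by (rule lipschitz_of_derivative_bound[OF K_convex, where H = "Hf i"])
    (use f_hess K_sub_O norm_Hf_le in auto)

lemma gF_lipschitz:
  assumes x: "x \<in> K" and y: "y \<in> K"
  shows "norm (gF x - gF y) \<le> Lg * norm (x - y)"
proof -
  have "norm (gF x - gF y) = (1 / real m) * norm (\<Sum>i<m. gf i x - gf i y)"
    using m_gt0 by (simp add: gF_def sum_subtractf flip: scaleR_diff_right)
  also have "\<dots> \<le> (1 / real m) * (\<Sum>i<m. Lg * norm (x - y))"
    using m_gt0 gf_lipschitz[OF _ x y]
    by (intro mult_left_mono order_trans[OF norm_sum sum_mono]) auto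
  also have "\<dots> = Lg * norm (x - y)" using m_gt0 by simp
  finally show ?thesis .
qed

lemma F_descent: "w \<in> K \<Longrightarrow> z \<in> K \<Longrightarrow> F z \<le> F w + gF w \<bullet> (z - w) + Lg / 2 * (norm (z - w))\<^sup>2"
  by (rule descent_lemma[OF K_convex, where gg = gF]) (use F_has_derivative K_sub_O gF_lipschitz in auto)

lemma F_strongly_convex:
  assumes "w \<in> K" "z \<in> K"
  shows "F w + gF w \<bullet> (z - w) + \<mu> / 2 * (norm (z - w))\<^sup>2 \<le> F z"
    and "\<mu> * (norm (z - w))\<^sup>2 \<le> (gF z - gF w) \<bullet> (z - w)"
  using strong_convexity_of_hessian_lower_bound[OF K_convex assms, where g = F and gg = gF and Hg = HF and c = \<mu>]
    F_has_derivative gF_has_derivative K_sub_O HF_bounds by auto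

lemma F_convex: "convex_on K F"
  unfolding convex_on_def
proof (intro conjI K_convex ballI allI impI)
  fix x y :: 'a and u v :: real assume xy: "x \<in> K" "y \<in> K" and uv: "0 \<le> u" "0 \<le> v" "u + v = 1"
  have "(\<Sum>i<m. f i (u *\<^sub>R x + v *\<^sub>R y)) \<le> (\<Sum>i<m. u * f i x + v * f i y)"
    using f_convex xy uv K_sub_O unfolding convex_on_def by (intro sum_mono) blast
  hence "(1 / real m) * (\<Sum>i<m. f i (u *\<^sub>R x + v *\<^sub>R y)) \<le> (1 / real m) * (\<Sum>i<m. u * f i x + v * f i y)"
    using m_gt0 by (intro mult_left_mono) auto
  thus "F (u *\<^sub>R x + v *\<^sub>R y) \<le> u * F x + v * F y"
    by (simp add: F_def sum.distrib sum_distrib_left algebra_simps)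
qed

lemma U_convex: "convex_on K U"
  unfolding U_def[abs_def] by (rule convex_on_add[OF F_convex G_convex])

lemma U_min: "x \<in> K \<Longrightarrow> U xstar \<le> U x"
  using xstar_min by (simp add: U_def F_def)

lemma xstar_variational_inequality: "z \<in> K \<Longrightarrow> 0 \<le> gF xstar \<bullet> (z - xstar) + G z - G xstar"
  by (rule minimizer_variational_inequality[OF K_convex xstar_in _ F_descent G_convex])
    (use U_min in \<open>auto simp: U_def\<close>)

lemma U_quadratic_growth: "x \<in> K \<Longrightarrow> \<mu> / 2 * (norm (x - xstar))\<^sup>2 \<le> U x - U xstar"
  using F_strongly_convex(1)[OF xstar_in, of x] xstar_variational_inequality[of x] by (simp add: U_def)

definition mt where "mt = Min (mut ` {..<m})"
definition LT where "LT = Max (Lt ` {..<m})"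

lemma mt_le: "i < m \<Longrightarrow> mt \<le> mut i"
  unfolding mt_def by (intro Min_le) auto

lemma mt_pos: "mt > 0"
proof -
  have "mut ` {..<m} \<noteq> {}" using m_pos by (auto simp: lessThan_empty_iff)
  thus ?thesis unfolding mt_def using mut_pos by (subst Min_gr_iff) auto
qed

lemma gft_lipschitz:
  "i < m \<Longrightarrow> x \<in> K \<Longrightarrow> u \<in> K \<Longrightarrow> u' \<in> K \<Longrightarrow> norm (gft i u x - gft i u' x) \<le> LT * norm (u - u')"
  using ft_lipschitz unfolding lipschitz_on_def dist_norm LT_def
  by (smt (verit) Max_ge finite_imageI finite_lessThan image_eqI lessThan_iff mult_right_mono norm_ge_zero)

lemma LT_nonneg: "LT \<ge> 0"
proof -
  have "0 \<le> Lt 0" using ft_lipschitz[of 0] K_ne m_pos unfolding lipschitz_on_def by auto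
  also have "Lt 0 \<le> LT" unfolding LT_def using m_pos by (intro Max_ge) auto
  finally show ?thesis .
qed

lemma ft_descent:
  "i < m \<Longrightarrow> x \<in> K \<Longrightarrow> w \<in> K \<Longrightarrow> z \<in> K \<Longrightarrow>
     ft i z x \<le> ft i w x + gft i w x \<bullet> (z - w) + LT / 2 * (norm (z - w))\<^sup>2"
  by (rule descent_lemma[OF K_convex, where gg = "\<lambda>u. gft i u x"])
    (use ft_grad K_sub_O gft_lipschitz in auto)

lemma gft_monotone:
  assumes i: "i < m" and x: "x \<in> K" and w: "w \<in> K" and z: "z \<in> K"
  shows "mt * (norm (z - w))\<^sup>2 \<le> (gft i z x - gft i w x) \<bullet> (z - w)"
proof -
  have "mut i * (norm (z - w))\<^sup>2 \<le> (gft i z x - gft i w x) \<bullet> (z - w)"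
    by (rule strongly_convex_on_gradient_monotone[OF ft_strongly_convex[OF i x] w z])
      (use ft_grad i w z x K_sub_O in auto)
  moreover have "mt * (norm (z - w))\<^sup>2 \<le> mut i * (norm (z - w))\<^sup>2"
    using mt_le[OF i] by (intro mult_right_mono) auto
  ultimately show ?thesis by linarith
qed

definition dist_const where "dist_const = 1 + (Lg + LT + 2) / \<mu>"
definition step_dist_const where "step_dist_const = 1 + (Lg + LT + 2) / mt"
definition comparison_const where
  "comparison_const = 2 * ((LT + 1 + Lg * dist_const) * (dist_const + 1) + Lg / 2 * (dist_const + 1)\<^sup>2)"
definition gap_rate where "gap_rate = (mt / 2) / (comparison_const + mt / 2)"
definition gap_const where "gap_const = comparison_const + 1 / mt"
definition step_const where "step_const = 2 * step_dist_const\<^sup>2 * (2 / \<mu> + 1)"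

lemma dist_const_ge_1: "dist_const \<ge> 1"
  using Lg_pos LT_nonneg mu_pos by (simp add: dist_const_def)

lemma comparison_const_nonneg: "comparison_const \<ge> 0"
  using Lg_pos LT_nonneg dist_const_ge_1 unfolding comparison_const_def
  by (intro mult_nonneg_nonneg add_nonneg_nonneg) auto

lemma gap_rate_pos: "0 < gap_rate" and gap_rate_le_1: "gap_rate \<le> 1"
  using mt_pos comparison_const_nonneg by (auto simp: gap_rate_def field_simps)

lemma gap_const_nonneg: "gap_const \<ge> 0"
  using comparison_const_nonneg mt_pos by (simp add: gap_const_def)

lemma step_const_nonneg: "step_const \<ge> 0"
  using mu_pos by (simp add: step_const_def)

context
  fixes i :: nat and x y p :: 'a
  assumes i: "i < m" and x: "x \<in> K"
    and p_min: "is_argmin_on (\<lambda>z. ft i z x + (y - gf i x) \<bullet> (z - x) + G z) K p"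
begin

lemma p_in_K: "p \<in> K"
  using p_min by (simp add: is_argmin_on_def)

lemma surrogate_step_variational_inequality:
  assumes z: "z \<in> K"
  shows "0 \<le> (gft i p x + (y - gf i x)) \<bullet> (z - p) + G z - G p"
proof (rule minimizer_variational_inequality[OF K_convex p_in_K z _ G_convex, where c = LT])
  fix a b assume ab: "a \<in> K" "b \<in> K"
  have "(y - gf i x) \<bullet> (b - x) = (y - gf i x) \<bullet> (a - x) + (y - gf i x) \<bullet> (b - a)"
    by (simp add: inner_diff_right)
  with ft_descent[OF i x ab]
  show "ft i b x + (y - gf i x) \<bullet> (b - x) \<le> ft i a x + (y - gf i x) \<bullet> (a - x)
      + (gft i a x + (y - gf i x)) \<bullet> (b - a) + LT / 2 * (norm (b - a))\<^sup>2"
    by (simp add: inner_add_left)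
next
  fix w assume "w \<in> K"
  thus "ft i p x + (y - gf i x) \<bullet> (p - x) + G p \<le> ft i w x + (y - gf i x) \<bullet> (w - x) + G w"
    using p_min by (simp add: is_argmin_on_def)
qed

lemma surrogate_step_monotone: "mt * (norm (p - x))\<^sup>2 \<le> (gft i p x - gf i x) \<bullet> (p - x)"
  using gft_monotone[OF i x x p_in_K] ft_consistent[OF i x] by simp

lemma surrogate_step_lipschitz: "norm (gft i p x - gf i x) \<le> LT * norm (p - x)"
  using gft_lipschitz[OF i x p_in_K x] ft_consistent[OF i x] by simp

lemma agent_descent:
  assumes \<alpha>: "0 \<le> \<alpha>" "\<alpha> \<le> 1"
  shows "U (x + \<alpha> *\<^sub>R (p - x)) \<le> U x - \<alpha> * mt * (norm (p - x))\<^sup>2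
           + \<alpha> * norm (y - gF x) * norm (p - x) + Lg * \<alpha>\<^sup>2 / 2 * (norm (p - x))\<^sup>2"
proof -
  define x' where "x' = x + \<alpha> *\<^sub>R (p - x)"
  have x'K: "x' \<in> K" unfolding x'_def using convex_segment_mem[OF K_convex x p_in_K \<alpha>] .
  have F': "F x' \<le> F x + \<alpha> * (gF x \<bullet> (p - x)) + Lg / 2 * (\<alpha>\<^sup>2 * (norm (p - x))\<^sup>2)"
    using F_descent[OF x x'K] \<alpha> by (simp add: x'_def power_mult_distrib)
  have "x' = (1 - \<alpha>) *\<^sub>R x + \<alpha> *\<^sub>R p" by (simp add: x'_def algebra_simps)
  hence "G x' \<le> (1 - \<alpha>) * G x + \<alpha> * G p"
    using convex_onD[OF G_convex, of \<alpha> x p] \<alpha> x p_in_K by simp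
  hence "G x' \<le> G x + \<alpha> * (G p - G x)" by (simp add: algebra_simps)
  also have "\<alpha> * (G p - G x) \<le> \<alpha> * ((gft i p x + (y - gf i x)) \<bullet> (x - p))"
    using surrogate_step_variational_inequality[OF x] \<alpha> by (intro mult_left_mono) auto
  finally have G': "G x' \<le> G x - \<alpha> * ((gft i p x - gf i x) \<bullet> (p - x)) - \<alpha> * (y \<bullet> (p - x))"
    by (simp add: inner_add_left inner_diff_left inner_diff_right algebra_simps)
  have "\<alpha> * (mt * (norm (p - x))\<^sup>2) \<le> \<alpha> * ((gft i p x - gf i x) \<bullet> (p - x))"
    using surrogate_step_monotone \<alpha> by (intro mult_left_mono) auto
  moreover have "\<alpha> * ((gF x - y) \<bullet> (p - x)) \<le> \<alpha> * (norm (y - gF x) * norm (p - x))"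
    using norm_cauchy_schwarz[of "gF x - y" "p - x"] \<alpha> by (intro mult_left_mono) (auto simp: norm_minus_commute)
  ultimately show ?thesis
    using F' G' unfolding x'_def[symmetric] U_def by (simp add: inner_diff_left algebra_simps)
qed

lemma surrogate_step_residual:
  "((gft i p x - gf i x) + (y - gF x) + (gF x - gF xstar)) \<bullet> (p - xstar)
     \<le> G xstar - G p - gF xstar \<bullet> (p - xstar)"
  using surrogate_step_variational_inequality[OF xstar_in]
  by (simp add: inner_add_left inner_diff_left inner_diff_right algebra_simps)

lemma agent_error_bound:
  defines "nd \<equiv> norm (x - xstar)" and "n\<delta> \<equiv> norm (p - x)" and "\<epsilon> \<equiv> norm (y - gF x)"
  shows "\<mu> * nd\<^sup>2 + mt * n\<delta>\<^sup>2 \<le> (Lg + LT) * nd * n\<delta> + \<epsilon> * nd + \<epsilon> * n\<delta>"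
proof -
  define d where "d = x - xstar"
  define \<delta> where "\<delta> = p - x"
  have pd: "p - xstar = \<delta> + d" by (simp add: d_def \<delta>_def)
  have lower: "- (norm a * norm b) \<le> a \<bullet> b" for a b :: 'a
    using Cauchy_Schwarz_ineq2[of a b] by linarith
  have gFL: "norm (gF x - gF xstar) \<le> Lg * nd"
    using gF_lipschitz[OF x xstar_in] by (simp add: nd_def)
  have "((gft i p x - gf i x) + (y - gF x) + (gF x - gF xstar)) \<bullet> (p - xstar) \<le> 0"
    using surrogate_step_residual xstar_variational_inequality[OF p_in_K] by linarith
  moreover have "mt * n\<delta>\<^sup>2 \<le> (gft i p x - gf i x) \<bullet> \<delta>"
    using surrogate_step_monotone by (simp add: \<delta>_def n\<delta>_def)
  moreover have "- (LT * n\<delta> * nd) \<le> (gft i p x - gf i x) \<bullet> d"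
    using lower[of "gft i p x - gf i x" d] surrogate_step_lipschitz
      mult_right_mono[OF surrogate_step_lipschitz norm_ge_zero[of d]]
    by (simp add: d_def \<delta>_def nd_def n\<delta>_def)
  moreover have "- (\<epsilon> * (nd + n\<delta>)) \<le> (y - gF x) \<bullet> (p - xstar)"
  proof -
    have "norm (p - xstar) \<le> nd + n\<delta>"
      unfolding pd nd_def n\<delta>_def d_def \<delta>_def by (metis add.commute norm_triangle_ineq)
    thus ?thesis using lower[of "y - gF x" "p - xstar"]
      by (smt (verit, best) \<epsilon>_def mult_left_mono norm_ge_zero)
  qed
  moreover have "\<mu> * nd\<^sup>2 \<le> (gF x - gF xstar) \<bullet> d"
    using F_strongly_convex(2)[OF xstar_in x] by (simp add: d_def nd_def)
  moreover have "- (Lg * nd * n\<delta>) \<le> (gF x - gF xstar) \<bullet> \<delta>"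
    using lower[of "gF x - gF xstar" \<delta>] mult_right_mono[OF gFL norm_ge_zero[of \<delta>]]
    by (simp add: \<delta>_def n\<delta>_def)
  moreover have "((gft i p x - gf i x) + (y - gF x) + (gF x - gF xstar)) \<bullet> (p - xstar)
      = (gft i p x - gf i x) \<bullet> \<delta> + (gft i p x - gf i x) \<bullet> d + (y - gF x) \<bullet> (p - xstar)
        + (gF x - gF xstar) \<bullet> d + (gF x - gF xstar) \<bullet> \<delta>"
    unfolding pd by (simp add: inner_add_left inner_add_right inner_diff_left algebra_simps)
  ultimately show ?thesis by (simp add: algebra_simps)
qed


lemma agent_gap_comparison:
  defines "nd \<equiv> norm (x - xstar)" and "n\<delta> \<equiv> norm (p - x)" and "\<epsilon> \<equiv> norm (y - gF x)"
  assumes \<alpha>: "0 \<le> \<alpha>" "\<alpha> \<le> 1"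
  shows "U (x + \<alpha> *\<^sub>R (p - x)) - U xstar
           \<le> (1 - \<alpha>) * (U x - U xstar) + \<alpha> * ((LT * n\<delta> + \<epsilon> + Lg * nd) * (nd + n\<delta>) + Lg / 2 * (nd + n\<delta>)\<^sup>2)"
proof -
  define v where "v = (gft i p x - gf i x) + (y - gF x) + (gF x - gF xstar)"
  have dist: "norm (p - xstar) \<le> nd + n\<delta>"
    unfolding nd_def n\<delta>_def by (metis add.commute diff_add_cancel norm_triangle_ineq add_diff_eq)
  have nv: "norm v \<le> LT * n\<delta> + \<epsilon> + Lg * nd"
  proof -
    have "norm v \<le> norm (gft i p x - gf i x) + norm (y - gF x) + norm (gF x - gF xstar)"
      unfolding v_def by (meson add_mono norm_triangle_ineq order_trans order_refl)
    thus ?thesis using surrogate_step_lipschitz gF_lipschitz[OF x xstar_in]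
      by (simp add: \<epsilon>_def nd_def n\<delta>_def)
  qed
  have "U p - U xstar \<le> - (v \<bullet> (p - xstar)) + Lg / 2 * (norm (p - xstar))\<^sup>2"
    using F_descent[OF xstar_in p_in_K] surrogate_step_residual by (simp add: U_def v_def)
  also have "- (v \<bullet> (p - xstar)) \<le> norm v * norm (p - xstar)"
    using Cauchy_Schwarz_ineq2[of v "p - xstar"] by (simp add: abs_le_iff)
  also have "\<dots> \<le> (LT * n\<delta> + \<epsilon> + Lg * nd) * (nd + n\<delta>)"
    using nv dist order_trans[OF norm_ge_zero nv] by (intro mult_mono) auto
  also have "Lg / 2 * (norm (p - xstar))\<^sup>2 \<le> Lg / 2 * (nd + n\<delta>)\<^sup>2"
    using dist Lg_pos by (intro mult_left_mono power_mono) auto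
  finally have Up: "U p - U xstar \<le> (LT * n\<delta> + \<epsilon> + Lg * nd) * (nd + n\<delta>) + Lg / 2 * (nd + n\<delta>)\<^sup>2"
    by simp
  have "x + \<alpha> *\<^sub>R (p - x) = (1 - \<alpha>) *\<^sub>R x + \<alpha> *\<^sub>R p" by (simp add: algebra_simps)
  hence "U (x + \<alpha> *\<^sub>R (p - x)) \<le> (1 - \<alpha>) * U x + \<alpha> * U p"
    using convex_onD[OF U_convex, of \<alpha> x p] \<alpha> x p_in_K by simp
  with mult_left_mono[OF Up \<alpha>(1)] show ?thesis by (simp add: algebra_simps)
qed

lemma agent_coarse_bound:
  assumes \<alpha>: "0 \<le> \<alpha>" "\<alpha> \<le> 1"
  shows "U (x + \<alpha> *\<^sub>R (p - x)) - U xstar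
           \<le> (1 - \<alpha>) * (U x - U xstar) + \<alpha> * comparison_const * ((norm (p - x))\<^sup>2 + (norm (y - gF x))\<^sup>2)"
proof -
  define nd where "nd = norm (x - xstar)"
  define n\<delta> where "n\<delta> = norm (p - x)"
  define \<epsilon> where "\<epsilon> = norm (y - gF x)"
  define s where "s = n\<delta> + \<epsilon>"
  have nn: "0 \<le> nd" "0 \<le> n\<delta>" "0 \<le> \<epsilon>" "0 \<le> s" by (auto simp: nd_def n\<delta>_def \<epsilon>_def s_def)
  have "0 \<le> mt * n\<delta>\<^sup>2" using mt_pos by simp
  hence "\<mu> * nd\<^sup>2 \<le> (Lg + LT) * nd * n\<delta> + \<epsilon> * nd + \<epsilon> * n\<delta>"
    using agent_error_bound unfolding nd_def n\<delta>_def \<epsilon>_def by linarith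
  hence nd_le: "nd \<le> dist_const * s"
    unfolding dist_const_def s_def
    by (intro quadratic_le_imp_linear_bound[OF nn(1-3) mu_pos]) (use Lg_pos LT_nonneg in auto)
  have sum_le: "nd + n\<delta> \<le> (dist_const + 1) * s" using nd_le nn by (simp add: s_def algebra_simps)
  have "Lg * nd \<le> Lg * (dist_const * s)" using nd_le Lg_pos by (intro mult_left_mono) auto
  moreover have "LT * n\<delta> \<le> LT * s" using LT_nonneg nn by (intro mult_left_mono) (auto simp: s_def)
  ultimately have residual_le: "LT * n\<delta> + \<epsilon> + Lg * nd \<le> (LT + 1 + Lg * dist_const) * s"
    using nn by (simp add: s_def algebra_simps)
  have "(LT * n\<delta> + \<epsilon> + Lg * nd) * (nd + n\<delta>) \<le> ((LT + 1 + Lg * dist_const) * s) * ((dist_const + 1) * s)"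
    by (rule mult_mono[OF residual_le sum_le]) (use nn Lg_pos LT_nonneg dist_const_ge_1 in auto)
  moreover have "Lg / 2 * (nd + n\<delta>)\<^sup>2 \<le> Lg / 2 * ((dist_const + 1) * s)\<^sup>2"
    using power_mono[OF sum_le, of 2] nn Lg_pos by (intro mult_left_mono) auto
  ultimately have "(LT * n\<delta> + \<epsilon> + Lg * nd) * (nd + n\<delta>) + Lg / 2 * (nd + n\<delta>)\<^sup>2
      \<le> ((LT + 1 + Lg * dist_const) * s) * ((dist_const + 1) * s) + Lg / 2 * ((dist_const + 1) * s)\<^sup>2"
    by (rule add_mono)
  also have "\<dots> = comparison_const / 2 * s\<^sup>2"
    by (simp add: comparison_const_def power2_eq_square algebra_simps)
  also have "\<dots> \<le> comparison_const * (n\<delta>\<^sup>2 + \<epsilon>\<^sup>2)"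
    using mult_left_mono[OF square_add_le[of n\<delta> \<epsilon>] comparison_const_nonneg] unfolding s_def
    by (simp add: algebra_simps)
  finally have "\<alpha> * ((LT * n\<delta> + \<epsilon> + Lg * nd) * (nd + n\<delta>) + Lg / 2 * (nd + n\<delta>)\<^sup>2)
      \<le> \<alpha> * (comparison_const * (n\<delta>\<^sup>2 + \<epsilon>\<^sup>2))" using \<alpha> by (intro mult_left_mono)
  with agent_gap_comparison[OF \<alpha>] show ?thesis by (simp add: nd_def n\<delta>_def \<epsilon>_def mult.assoc)
qed

lemma agent_fine_bound:
  assumes \<alpha>: "0 \<le> \<alpha>" "\<alpha> \<le> 1" "\<alpha> * Lg \<le> mt / 2"
  shows "U (x + \<alpha> *\<^sub>R (p - x)) - U xstar
           \<le> (U x - U xstar) - \<alpha> * (mt / 2) * (norm (p - x))\<^sup>2 + \<alpha> * (1 / mt) * (norm (y - gF x))\<^sup>2"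
proof -
  define n\<delta> where "n\<delta> = norm (p - x)"
  define \<epsilon> where "\<epsilon> = norm (y - gF x)"
  have "2 * (n\<delta> * \<epsilon>) \<le> (mt / 2) * n\<delta>\<^sup>2 + (1 / (mt / 2)) * \<epsilon>\<^sup>2"
    using two_mult_le_weighted_squares[of "mt / 2" n\<delta> \<epsilon>] mt_pos by simp
  hence "\<alpha> * (\<epsilon> * n\<delta>) \<le> \<alpha> * ((mt / 4) * n\<delta>\<^sup>2 + (1 / mt) * \<epsilon>\<^sup>2)"
    using \<alpha> by (intro mult_left_mono) (auto simp: field_simps)
  moreover have "Lg * \<alpha>\<^sup>2 / 2 * n\<delta>\<^sup>2 \<le> \<alpha> * (mt / 4) * n\<delta>\<^sup>2"
  proof -
    have "Lg * \<alpha>\<^sup>2 / 2 = \<alpha> * (\<alpha> * Lg / 2)" by (simp add: power2_eq_square algebra_simps)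
    also have "\<dots> \<le> \<alpha> * (mt / 4)" using \<alpha> by (intro mult_left_mono) auto
    finally show ?thesis by (intro mult_right_mono) auto
  qed
  ultimately show ?thesis
    using agent_descent[OF \<alpha>(1,2)] by (simp add: n\<delta>_def \<epsilon>_def algebra_simps)
qed

lemma agent_gap_contraction:
  assumes \<alpha>: "0 \<le> \<alpha>" "\<alpha> \<le> 1" "\<alpha> * Lg \<le> mt / 2"
  shows "U (x + \<alpha> *\<^sub>R (p - x)) - U xstar
           \<le> (1 - gap_rate * \<alpha>) * (U x - U xstar) + \<alpha> * gap_const * (norm (y - gF x))\<^sup>2"
  using contraction_of_two_bounds[OF comparison_const_nonneg _ _ \<alpha>(1) _
      agent_coarse_bound[OF \<alpha>(1,2)] agent_fine_bound[OF \<alpha>]] mt_pos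
  by (simp add: gap_rate_def gap_const_def)

lemma agent_step_bound:
  "(norm (p - x))\<^sup>2 \<le> step_const * ((U x - U xstar) + (norm (y - gF x))\<^sup>2)"
proof -
  define nd where "nd = norm (x - xstar)"
  define n\<delta> where "n\<delta> = norm (p - x)"
  define \<epsilon> where "\<epsilon> = norm (y - gF x)"
  have nn: "0 \<le> nd" "0 \<le> n\<delta>" "0 \<le> \<epsilon>" by (auto simp: nd_def n\<delta>_def \<epsilon>_def)
  have "mt * n\<delta>\<^sup>2 \<le> (Lg + LT) * n\<delta> * nd + \<epsilon> * n\<delta> + \<epsilon> * nd"
  proof -
    have "0 \<le> \<mu> * nd\<^sup>2" using mu_pos by simp
    thus ?thesis using agent_error_bound unfolding nd_def n\<delta>_def \<epsilon>_def by (simp add: algebra_simps)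
  qed
  hence "n\<delta> \<le> step_dist_const * (nd + \<epsilon>)"
    unfolding step_dist_const_def
    by (intro quadratic_le_imp_linear_bound[OF nn(2,1,3) mt_pos]) (use Lg_pos LT_nonneg in auto)
  hence "n\<delta>\<^sup>2 \<le> step_dist_const\<^sup>2 * (nd + \<epsilon>)\<^sup>2"
    using nn by (metis power_mono power_mult_distrib)
  also have "\<dots> \<le> step_dist_const\<^sup>2 * (2 * (nd\<^sup>2 + \<epsilon>\<^sup>2))"
    by (intro mult_left_mono square_add_le) auto
  also have "nd\<^sup>2 \<le> 2 / \<mu> * (U x - U xstar)"
    using U_quadratic_growth[OF x] mu_pos by (simp add: nd_def field_simps)
  hence "step_dist_const\<^sup>2 * (2 * (nd\<^sup>2 + \<epsilon>\<^sup>2)) \<le> step_const * ((U x - U xstar) + \<epsilon>\<^sup>2)"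
  proof -
    have "2 / \<mu> * (U x - U xstar) + \<epsilon>\<^sup>2 \<le> (2 / \<mu> + 1) * ((U x - U xstar) + \<epsilon>\<^sup>2)"
      using U_min[OF x] mu_pos by (simp add: algebra_simps add_increasing2)
    with \<open>nd\<^sup>2 \<le> 2 / \<mu> * (U x - U xstar)\<close>
    have "nd\<^sup>2 + \<epsilon>\<^sup>2 \<le> (2 / \<mu> + 1) * ((U x - U xstar) + \<epsilon>\<^sup>2)" by linarith
    hence "step_dist_const\<^sup>2 * (2 * (nd\<^sup>2 + \<epsilon>\<^sup>2))
        \<le> step_dist_const\<^sup>2 * (2 * ((2 / \<mu> + 1) * ((U x - U xstar) + \<epsilon>\<^sup>2)))"
      by (intro mult_left_mono) auto
    thus ?thesis unfolding step_const_def by (simp add: mult_ac)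
  qed
  finally show ?thesis by (simp add: n\<delta>_def \<epsilon>_def)
qed

end

lemma gF_eq_avg: "gF v = avg m (\<lambda>j. gf j v)"
  by (simp add: gF_def avg_def)

lemma avg_gradients_deviation:
  assumes v: "\<And>j. j < m \<Longrightarrow> v j \<in> K"
  shows "real m * (norm (avg m (\<lambda>j. gf j (v j)) - gF (avg m v)))\<^sup>2 \<le> Lg\<^sup>2 * disagreement m v"
proof -
  define t where "t j = norm (v j - avg m v)" for j
  have vK: "avg m v \<in> K" by (rule avg_mem_convex[OF K_convex m_pos v])
  have "norm (avg m (\<lambda>j. gf j (v j)) - gF (avg m v)) = (1 / real m) * norm (\<Sum>j<m. gf j (v j) - gf j (avg m v))"
    using m_gt0 by (simp add: gF_eq_avg avg_def sum_subtractf flip: scaleR_diff_right)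
  also have "\<dots> \<le> (1 / real m) * (\<Sum>j<m. Lg * t j)"
    using m_gt0 gf_lipschitz[OF _ v vK] unfolding t_def
    by (intro mult_left_mono order_trans[OF norm_sum sum_mono]) auto
  finally have "(norm (avg m (\<lambda>j. gf j (v j)) - gF (avg m v)))\<^sup>2 \<le> (Lg / real m * (\<Sum>j<m. t j))\<^sup>2"
    by (simp add: sum_distrib_left power_mono)
  hence "real m * (norm (avg m (\<lambda>j. gf j (v j)) - gF (avg m v)))\<^sup>2 \<le> Lg\<^sup>2 * ((\<Sum>j<m. t j)\<^sup>2 / real m)"
    using m_gt0 by (simp add: power_divide power_mult_distrib field_simps) (simp add: power2_eq_square mult.assoc)
  also have "(\<Sum>j<m. t j)\<^sup>2 / real m \<le> disagreement m v"
    using square_sum_le_card_mult_sum_squares[of t m] m_gt0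
    by (simp add: disagreement_def t_def field_simps)
  finally show ?thesis by (simp add: mult_left_mono)
qed

definition tracking_const where "tracking_const = 3 + 6 * Lg\<^sup>2"
definition mix_const where "mix_const = \<rho> * (1 + 2 * \<rho> / (1 - \<rho>))"
definition perturb_const where
  "perturb_const = mix_const * step_const * (1 + tracking_const) * (1 + 9 * Lg\<^sup>2)"

lemma mix_const_nonneg: "0 \<le> mix_const"
  using rho by (simp add: mix_const_def)

lemma perturb_const_nonneg: "0 \<le> perturb_const"
  using mix_const_nonneg step_const_nonneg by (simp add: perturb_const_def tracking_const_def)

text \<open>The Young parameter (1 - \<rho>) / (2 \<rho>) splits the mixing factor \<rho> into
  the consensus rate (1 + \<rho>) / 2 < 1 and the perturbation weight mix_const.\<close>

lemma consensus_split:
  defines "\<eta> \<equiv> (1 - \<rho>) / (2 * \<rho>)"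
  shows "0 < \<eta>" "\<rho> * (1 + \<eta>) = (1 + \<rho>) / 2" "\<rho> * (1 + 1 / \<eta>) = mix_const"
  using rho by (auto simp: \<eta>_def mix_const_def field_simps)

end

section \<open>SONATA trajectories\<close>

locale sonata_trajectory = sonata_problem +
  fixes \<alpha> :: real and x y xh :: "nat \<Rightarrow> nat \<Rightarrow> 'a"
  assumes run: "sonata_run m K W gf ft G \<alpha> x y xh"
    and step_pos: "0 < \<alpha>" and step_le_1: "\<alpha> \<le> 1" and step_small: "\<alpha> * Lg \<le> mt / 2"
begin

definition z where "z j \<nu> = x j \<nu> + \<alpha> *\<^sub>R (xh j \<nu> - x j \<nu>)"
definition gap where "gap \<nu> = (\<Sum>j<m. U (x j \<nu>) - U xstar)"
definition xdis where "xdis \<nu> = disagreement m (\<lambda>j. x j \<nu>)"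
definition ydis where "ydis \<nu> = disagreement m (\<lambda>j. y j \<nu>)"
definition steps where "steps \<nu> = (\<Sum>j<m. (norm (xh j \<nu> - x j \<nu>))\<^sup>2)"
definition tracking where "tracking \<nu> = (\<Sum>j<m. (norm (y j \<nu> - gF (x j \<nu>)))\<^sup>2)"

lemma xh_argmin:
  "j < m \<Longrightarrow> is_argmin_on (\<lambda>w. ft j w (x j \<nu>) + (y j \<nu> - gf j (x j \<nu>)) \<bullet> (w - x j \<nu>) + G w) K (xh j \<nu>)"
  using run unfolding sonata_run_def by blast

lemma x_next: "i < m \<Longrightarrow> x i (Suc \<nu>) = (\<Sum>j<m. W i j *\<^sub>R z j \<nu>)"
  using run unfolding sonata_run_def z_def by blast

lemma y_next: "i < m \<Longrightarrow> y i (Suc \<nu>) = (\<Sum>j<m. W i j *\<^sub>R (y j \<nu> + (gf j (x j (Suc \<nu>)) - gf j (x j \<nu>))))"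
  using run unfolding sonata_run_def by (simp add: algebra_simps)

lemma x_in_K: "j < m \<Longrightarrow> x j \<nu> \<in> K"
proof (induction \<nu> arbitrary: j)
  case 0 thus ?case using run unfolding sonata_run_def by blast
next
  case (Suc \<nu>)
  have "z k \<nu> \<in> K" if "k < m" for k
    unfolding z_def using convex_segment_mem[OF K_convex Suc.IH[OF that] _ step_pos[THEN less_imp_le] step_le_1]
      xh_argmin[OF that] by (simp add: is_argmin_on_def)
  hence "(\<Sum>k\<in>{..<m}. W j k *\<^sub>R z k \<nu>) \<in> K"
    using weight_matrix_okD(1,2)[OF W_ok] Suc.prems by (intro convex_sum[OF _ K_convex]) auto
  thus ?case using x_next[OF Suc.prems] by simp
qed

lemma xh_in_K: "j < m \<Longrightarrow> xh j \<nu> \<in> K"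
  using xh_argmin by (simp add: is_argmin_on_def)

lemma z_in_K: "j < m \<Longrightarrow> z j \<nu> \<in> K"
  unfolding z_def using convex_segment_mem[OF K_convex x_in_K xh_in_K] step_pos step_le_1 by simp

lemma sum_y_eq_sum_gf: "(\<Sum>j<m. y j \<nu>) = (\<Sum>j<m. gf j (x j \<nu>))"
proof (induction \<nu>)
  case 0 thus ?case using run unfolding sonata_run_def by simp
next
  case (Suc \<nu>)
  have "(\<Sum>i<m. y i (Suc \<nu>)) = (\<Sum>i<m. \<Sum>j<m. W i j *\<^sub>R (y j \<nu> + (gf j (x j (Suc \<nu>)) - gf j (x j \<nu>))))"
    using y_next by simp
  also have "\<dots> = (\<Sum>j<m. y j \<nu>) + ((\<Sum>j<m. gf j (x j (Suc \<nu>))) - (\<Sum>j<m. gf j (x j \<nu>)))"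
    by (simp add: sum_mix_eq_sum[OF W_ok] sum.distrib sum_subtractf)
  finally show ?case using Suc by simp
qed

lemma gap_nonneg: "0 \<le> gap \<nu>"
  unfolding gap_def using U_min x_in_K by (intro sum_nonneg) auto

lemma agent_gap_le_gap: "i < m \<Longrightarrow> \<bar>U (x i \<nu>) - U xstar\<bar> \<le> gap \<nu>"
  using member_le_sum[of i "{..<m}" "\<lambda>j. U (x j \<nu>) - U xstar"] U_min x_in_K
  by (simp add: gap_def)

lemma gap_next_le: "gap (Suc \<nu>) \<le> (\<Sum>j<m. U (z j \<nu>) - U xstar)"
proof -
  have "U (x i (Suc \<nu>)) - U xstar \<le> (\<Sum>j<m. W i j * (U (z j \<nu>) - U xstar))" if i: "i < m" for i
  proof -
    have "U (\<Sum>j\<in>{..<m}. W i j *\<^sub>R z j \<nu>) \<le> (\<Sum>j\<in>{..<m}. W i j * U (z j \<nu>))"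
      using weight_matrix_okD(1,2)[OF W_ok] i z_in_K m_pos
      by (intro convex_on_sum[OF _ _ U_convex]) auto
    thus ?thesis using x_next[OF i] weight_matrix_okD(2)[OF W_ok i]
      by (simp add: right_diff_distrib sum_subtractf flip: sum_distrib_right)
  qed
  hence "gap (Suc \<nu>) \<le> (\<Sum>i<m. \<Sum>j<m. W i j * (U (z j \<nu>) - U xstar))"
    unfolding gap_def by (intro sum_mono) auto
  also have "\<dots> = (\<Sum>j<m. U (z j \<nu>) - U xstar)"
    using weight_matrix_okD(3)[OF W_ok] by (subst sum.swap) (simp flip: sum_distrib_right)
  finally show ?thesis .
qed

lemma gap_recursion: "gap (Suc \<nu>) \<le> (1 - gap_rate * \<alpha>) * gap \<nu> + \<alpha> * gap_const * tracking \<nu>"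
proof -
  have "gap (Suc \<nu>) \<le> (\<Sum>j<m. (1 - gap_rate * \<alpha>) * (U (x j \<nu>) - U xstar)
                                 + \<alpha> * gap_const * (norm (y j \<nu> - gF (x j \<nu>)))\<^sup>2)"
    using gap_next_le agent_gap_contraction[OF _ x_in_K xh_argmin step_pos[THEN less_imp_le] step_le_1 step_small]
    unfolding z_def by (smt (verit) lessThan_iff sum_mono)
  thus ?thesis by (simp add: gap_def tracking_def sum.distrib sum_distrib_left)
qed

lemma steps_le: "steps \<nu> \<le> step_const * (gap \<nu> + tracking \<nu>)"
proof -
  have "steps \<nu> \<le> (\<Sum>j<m. step_const * ((U (x j \<nu>) - U xstar) + (norm (y j \<nu> - gF (x j \<nu>)))\<^sup>2))"
    unfolding steps_def using agent_step_bound[OF _ x_in_K xh_argmin] by (intro sum_mono) auto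
  thus ?thesis by (simp add: gap_def tracking_def sum.distrib sum_distrib_left distrib_left)
qed

lemma xdis_next_le:
  assumes \<eta>: "\<eta> > 0"
  shows "xdis (Suc \<nu>) \<le> \<rho> * ((1 + \<eta>) * xdis \<nu> + (1 + 1 / \<eta>) * \<alpha>\<^sup>2 * steps \<nu>)"
proof -
  have "xdis (Suc \<nu>) = disagreement m (\<lambda>i. \<Sum>j<m. W i j *\<^sub>R z j \<nu>)"
    unfolding xdis_def by (rule disagreement_cong) (simp add: x_next)
  also have "\<dots> \<le> \<rho> * disagreement m (\<lambda>j. x j \<nu> + \<alpha> *\<^sub>R (xh j \<nu> - x j \<nu>))"
    using mixing by (simp add: z_def)
  also have "disagreement m (\<lambda>j. x j \<nu> + \<alpha> *\<^sub>R (xh j \<nu> - x j \<nu>))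
      \<le> (1 + \<eta>) * xdis \<nu> + (1 + 1 / \<eta>) * \<alpha>\<^sup>2 * steps \<nu>"
    using disagreement_add_le[OF \<eta> m_pos, of "\<lambda>j. x j \<nu>" "\<lambda>j. \<alpha> *\<^sub>R (xh j \<nu> - x j \<nu>)"]
    by (simp add: xdis_def steps_def power_mult_distrib sum_distrib_left mult.assoc)
  finally show ?thesis using rho by (simp add: mult_left_mono)
qed

lemma iterate_change_le: "(\<Sum>j<m. (norm (x j (Suc \<nu>) - x j \<nu>))\<^sup>2) \<le> 9 * xdis \<nu> + 9 * \<alpha>\<^sup>2 * steps \<nu>"
proof -
  let ?x' = "\<lambda>j. x j (Suc \<nu>)" and ?x = "\<lambda>j. x j \<nu>" and ?d = "\<lambda>j. xh j \<nu> - x j \<nu>"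
  have avg_next: "avg m ?x' = avg m ?x + \<alpha> *\<^sub>R avg m ?d"
  proof -
    have "avg m ?x' = avg m (\<lambda>i. \<Sum>j<m. W i j *\<^sub>R z j \<nu>)" by (rule avg_cong) (simp add: x_next)
    thus ?thesis by (simp add: avg_mix_eq_avg[OF W_ok] z_def avg_add avg_scaleR)
  qed
  have "(\<Sum>j<m. (norm (?x' j - ?x j))\<^sup>2)
      \<le> (\<Sum>j<m. 3 * ((norm (?x' j - avg m ?x'))\<^sup>2 + (norm (\<alpha> *\<^sub>R avg m ?d))\<^sup>2 + (norm (avg m ?x - ?x j))\<^sup>2))"
  proof (rule sum_mono)
    fix j
    have "(norm (?x' j - ?x j))\<^sup>2 = (norm ((?x' j - avg m ?x') + \<alpha> *\<^sub>R avg m ?d + (avg m ?x - ?x j)))\<^sup>2"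
      using avg_next by (simp add: algebra_simps)
    also have "\<dots> \<le> 3 * ((norm (?x' j - avg m ?x'))\<^sup>2 + (norm (\<alpha> *\<^sub>R avg m ?d))\<^sup>2 + (norm (avg m ?x - ?x j))\<^sup>2)"
      by (rule norm_add3_square_le)
    finally show "(norm (?x' j - ?x j))\<^sup>2
        \<le> 3 * ((norm (?x' j - avg m ?x'))\<^sup>2 + (norm (\<alpha> *\<^sub>R avg m ?d))\<^sup>2 + (norm (avg m ?x - ?x j))\<^sup>2)" .
  qed
  also have "\<dots> = 3 * (xdis (Suc \<nu>) + \<alpha>\<^sup>2 * (real m * (norm (avg m ?d))\<^sup>2) + xdis \<nu>)"
    by (simp add: xdis_def disagreement_def sum.distrib sum_distrib_left norm_minus_commute
        power_mult_distrib algebra_simps)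
  finally have split: "(\<Sum>j<m. (norm (?x' j - ?x j))\<^sup>2)
      \<le> 3 * (xdis (Suc \<nu>) + \<alpha>\<^sup>2 * (real m * (norm (avg m ?d))\<^sup>2) + xdis \<nu>)" .
  have "xdis (Suc \<nu>) \<le> \<rho> * (2 * xdis \<nu> + 2 * \<alpha>\<^sup>2 * steps \<nu>)" using xdis_next_le[of 1] by simp
  also have "\<dots> \<le> 2 * xdis \<nu> + 2 * \<alpha>\<^sup>2 * steps \<nu>"
  proof (rule mult_left_le_one_le)
    have "0 \<le> steps \<nu>" unfolding steps_def by (intro sum_nonneg) auto
    thus "0 \<le> 2 * xdis \<nu> + 2 * \<alpha>\<^sup>2 * steps \<nu>"
      using disagreement_nonneg[of m ?x] by (simp add: xdis_def)
  qed (use rho in auto)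
  finally have next_le: "xdis (Suc \<nu>) \<le> 2 * xdis \<nu> + 2 * \<alpha>\<^sup>2 * steps \<nu>" .
  have "\<alpha>\<^sup>2 * (real m * (norm (avg m ?d))\<^sup>2) \<le> \<alpha>\<^sup>2 * steps \<nu>"
    unfolding steps_def by (intro mult_left_mono card_mult_norm_avg_square_le[OF m_pos]) auto
  with split next_le have "(\<Sum>j<m. (norm (?x' j - ?x j))\<^sup>2)
      \<le> 3 * ((2 * xdis \<nu> + 2 * \<alpha>\<^sup>2 * steps \<nu>) + \<alpha>\<^sup>2 * steps \<nu> + xdis \<nu>)"
    by (smt (verit) mult_left_mono)
  thus ?thesis by (simp add: algebra_simps)
qed

lemma ydis_next_le:
  assumes \<eta>: "\<eta> > 0"
  shows "ydis (Suc \<nu>) \<le> \<rho> * ((1 + \<eta>) * ydis \<nu> + (1 + 1 / \<eta>) * (Lg\<^sup>2 * (9 * xdis \<nu> + 9 * \<alpha>\<^sup>2 * steps \<nu>)))"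
proof -
  define \<Delta> where "\<Delta> j = gf j (x j (Suc \<nu>)) - gf j (x j \<nu>)" for j
  have "ydis (Suc \<nu>) = disagreement m (\<lambda>i. \<Sum>j<m. W i j *\<^sub>R (y j \<nu> + \<Delta> j))"
    unfolding ydis_def by (rule disagreement_cong) (simp add: y_next \<Delta>_def)
  also have "\<dots> \<le> \<rho> * disagreement m (\<lambda>j. y j \<nu> + \<Delta> j)" by (rule mixing)
  also have "disagreement m (\<lambda>j. y j \<nu> + \<Delta> j) \<le> (1 + \<eta>) * ydis \<nu> + (1 + 1 / \<eta>) * (\<Sum>j<m. (norm (\<Delta> j))\<^sup>2)"
    unfolding ydis_def by (rule disagreement_add_le[OF \<eta> m_pos])
  also have "(\<Sum>j<m. (norm (\<Delta> j))\<^sup>2) \<le> (\<Sum>j<m. Lg\<^sup>2 * (norm (x j (Suc \<nu>) - x j \<nu>))\<^sup>2)"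
  proof (rule sum_mono)
    fix j assume "j \<in> {..<m}"
    hence "norm (\<Delta> j) \<le> Lg * norm (x j (Suc \<nu>) - x j \<nu>)"
      unfolding \<Delta>_def by (intro gf_lipschitz x_in_K) auto
    thus "(norm (\<Delta> j))\<^sup>2 \<le> Lg\<^sup>2 * (norm (x j (Suc \<nu>) - x j \<nu>))\<^sup>2"
      by (metis norm_ge_zero power_mono power_mult_distrib)
  qed
  also have "\<dots> \<le> Lg\<^sup>2 * (9 * xdis \<nu> + 9 * \<alpha>\<^sup>2 * steps \<nu>)"
    using iterate_change_le by (simp add: sum_distrib_left[symmetric] mult_left_mono)
  finally show ?thesis using rho \<eta> by (simp add: mult_left_mono)
qed

lemma tracking_le: "tracking \<nu> \<le> 3 * ydis \<nu> + 6 * Lg\<^sup>2 * xdis \<nu>"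
proof -
  let ?x = "\<lambda>j. x j \<nu>" and ?y = "\<lambda>j. y j \<nu>"
  have xK: "\<And>j. j < m \<Longrightarrow> ?x j \<in> K" by (rule x_in_K)
  have avgK: "avg m ?x \<in> K" by (rule avg_mem_convex[OF K_convex m_pos xK])
  have avg_y: "avg m ?y = avg m (\<lambda>j. gf j (?x j))" by (simp add: avg_def sum_y_eq_sum_gf)
  have "tracking \<nu> \<le> (\<Sum>j<m. 3 * ((norm (?y j - avg m ?y))\<^sup>2 + (norm (avg m ?y - gF (avg m ?x)))\<^sup>2
                                  + (norm (gF (avg m ?x) - gF (?x j)))\<^sup>2))"
    unfolding tracking_def
  proof (rule sum_mono)
    fix j
    have "(norm (?y j - gF (?x j)))\<^sup>2
        = (norm ((?y j - avg m ?y) + (avg m ?y - gF (avg m ?x)) + (gF (avg m ?x) - gF (?x j))))\<^sup>2"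
      by simp
    also have "\<dots> \<le> 3 * ((norm (?y j - avg m ?y))\<^sup>2 + (norm (avg m ?y - gF (avg m ?x)))\<^sup>2
                         + (norm (gF (avg m ?x) - gF (?x j)))\<^sup>2)"
      by (rule norm_add3_square_le)
    finally show "(norm (?y j - gF (?x j)))\<^sup>2 \<le> 3 * ((norm (?y j - avg m ?y))\<^sup>2
        + (norm (avg m ?y - gF (avg m ?x)))\<^sup>2 + (norm (gF (avg m ?x) - gF (?x j)))\<^sup>2)" .
  qed
  also have "\<dots> = 3 * ydis \<nu> + 3 * (real m * (norm (avg m ?y - gF (avg m ?x)))\<^sup>2)
                  + 3 * (\<Sum>j<m. (norm (gF (avg m ?x) - gF (?x j)))\<^sup>2)"
    by (simp add: ydis_def disagreement_def sum.distrib sum_distrib_left)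
  also have "real m * (norm (avg m ?y - gF (avg m ?x)))\<^sup>2 \<le> Lg\<^sup>2 * xdis \<nu>"
    unfolding avg_y xdis_def by (rule avg_gradients_deviation[OF xK])
  also have "(\<Sum>j<m. (norm (gF (avg m ?x) - gF (?x j)))\<^sup>2) \<le> (\<Sum>j<m. Lg\<^sup>2 * (norm (?x j - avg m ?x))\<^sup>2)"
  proof (rule sum_mono)
    fix j assume "j \<in> {..<m}"
    hence "norm (gF (avg m ?x) - gF (?x j)) \<le> Lg * norm (?x j - avg m ?x)"
      using gF_lipschitz[OF avgK xK] by (simp add: norm_minus_commute)
    thus "(norm (gF (avg m ?x) - gF (?x j)))\<^sup>2 \<le> Lg\<^sup>2 * (norm (?x j - avg m ?x))\<^sup>2"
      by (metis norm_ge_zero power_mono power_mult_distrib)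
  qed
  also have "\<dots> = Lg\<^sup>2 * xdis \<nu>" by (simp add: xdis_def disagreement_def sum_distrib_left)
  finally show ?thesis by (simp add: algebra_simps)
qed

lemma tracking_le_total: "tracking \<nu> \<le> tracking_const * (ydis \<nu> + xdis \<nu>)"
proof -
  have "0 \<le> ydis \<nu>" "0 \<le> xdis \<nu>" by (simp_all add: xdis_def ydis_def disagreement_nonneg)
  hence "3 * ydis \<nu> + 6 * Lg\<^sup>2 * xdis \<nu> \<le> tracking_const * (ydis \<nu> + xdis \<nu>)"
    using mult_nonneg_nonneg[of "6 * Lg\<^sup>2" "ydis \<nu>"] by (simp add: tracking_const_def algebra_simps)
  with tracking_le show ?thesis by (rule order_trans)
qed

lemma steps_le_total: "steps \<nu> \<le> step_const * (1 + tracking_const) * (gap \<nu> + ydis \<nu> + xdis \<nu>)"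
proof -
  have "tracking \<nu> \<le> tracking_const * (ydis \<nu> + xdis \<nu>)" by (rule tracking_le_total)
  hence "gap \<nu> + tracking \<nu> \<le> gap \<nu> + tracking_const * (ydis \<nu> + xdis \<nu>)" by simp
  also have "\<dots> \<le> (1 + tracking_const) * (gap \<nu> + ydis \<nu> + xdis \<nu>)"
  proof -
    have "0 \<le> tracking_const" by (simp add: tracking_const_def)
    hence "0 \<le> tracking_const * gap \<nu>" using gap_nonneg by simp
    moreover have "0 \<le> ydis \<nu>" "0 \<le> xdis \<nu>" by (simp_all add: xdis_def ydis_def disagreement_nonneg)
    ultimately show ?thesis by (simp add: algebra_simps)
  qed
  finally have "gap \<nu> + tracking \<nu> \<le> (1 + tracking_const) * (gap \<nu> + ydis \<nu> + xdis \<nu>)" .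
  with steps_le step_const_nonneg show ?thesis
    by (smt (verit) mult.assoc mult_left_mono)
qed

lemma gap_coupled:
  "gap (Suc \<nu>) \<le> (1 - gap_rate * \<alpha>) * gap \<nu> + \<alpha> * (gap_const * tracking_const) * (ydis \<nu> + xdis \<nu>)"
proof -
  have "\<alpha> * gap_const * tracking \<nu> \<le> \<alpha> * gap_const * (tracking_const * (ydis \<nu> + xdis \<nu>))"
    using tracking_le_total step_pos gap_const_nonneg by (intro mult_left_mono) auto
  with gap_recursion[of \<nu>] show ?thesis by (simp only: mult.assoc)
qed

lemma steps_perturbation_le:
  assumes c: "0 \<le> c" "c \<le> 1 + 9 * Lg\<^sup>2"
  shows "mix_const * c * steps \<nu> \<le> perturb_const * (gap \<nu> + ydis \<nu> + xdis \<nu>)"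
proof -
  have "mix_const * c * steps \<nu>
      \<le> mix_const * (1 + 9 * Lg\<^sup>2) * (step_const * (1 + tracking_const) * (gap \<nu> + ydis \<nu> + xdis \<nu>))"
    using c steps_le_total mix_const_nonneg
    by (intro mult_mono mult_left_mono) (auto simp: steps_def intro!: sum_nonneg)
  also have "\<dots> = perturb_const * (gap \<nu> + ydis \<nu> + xdis \<nu>)" by (simp add: perturb_const_def mult_ac)
  finally show ?thesis .
qed

lemma xdis_coupled:
  "xdis (Suc \<nu>) \<le> (1 + \<rho>) / 2 * xdis \<nu> + \<alpha>\<^sup>2 * perturb_const * (gap \<nu> + ydis \<nu> + xdis \<nu>)"
proof -
  define \<eta> where "\<eta> = (1 - \<rho>) / (2 * \<rho>)"
  note \<eta> = consensus_split[folded \<eta>_def]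
  have "xdis (Suc \<nu>) \<le> \<rho> * ((1 + \<eta>) * xdis \<nu> + (1 + 1 / \<eta>) * \<alpha>\<^sup>2 * steps \<nu>)"
    by (rule xdis_next_le[OF \<eta>(1)])
  also have "\<dots> = (\<rho> * (1 + \<eta>)) * xdis \<nu> + \<alpha>\<^sup>2 * ((\<rho> * (1 + 1 / \<eta>)) * 1 * steps \<nu>)"
    by (simp add: algebra_simps)
  also have "\<dots> \<le> (1 + \<rho>) / 2 * xdis \<nu> + \<alpha>\<^sup>2 * (perturb_const * (gap \<nu> + ydis \<nu> + xdis \<nu>))"
    unfolding \<eta>(2,3) using steps_perturbation_le[of 1] by (intro add_left_mono mult_left_mono) auto
  finally show ?thesis by (simp add: mult.assoc)
qed

lemma ydis_coupled:
  "ydis (Suc \<nu>) \<le> (1 + \<rho>) / 2 * ydis \<nu> + 9 * mix_const * Lg\<^sup>2 * xdis \<nu>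
                    + \<alpha>\<^sup>2 * perturb_const * (gap \<nu> + ydis \<nu> + xdis \<nu>)"
proof -
  define \<eta> where "\<eta> = (1 - \<rho>) / (2 * \<rho>)"
  note \<eta> = consensus_split[folded \<eta>_def]
  have "ydis (Suc \<nu>) \<le> \<rho> * ((1 + \<eta>) * ydis \<nu> + (1 + 1 / \<eta>) * (Lg\<^sup>2 * (9 * xdis \<nu> + 9 * \<alpha>\<^sup>2 * steps \<nu>)))"
    by (rule ydis_next_le[OF \<eta>(1)])
  also have "\<dots> = (\<rho> * (1 + \<eta>)) * ydis \<nu> + 9 * (\<rho> * (1 + 1 / \<eta>)) * Lg\<^sup>2 * xdis \<nu>
      + \<alpha>\<^sup>2 * ((\<rho> * (1 + 1 / \<eta>)) * (9 * Lg\<^sup>2) * steps \<nu>)"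
    by (simp add: algebra_simps)
  also have "\<dots> \<le> (1 + \<rho>) / 2 * ydis \<nu> + 9 * mix_const * Lg\<^sup>2 * xdis \<nu>
      + \<alpha>\<^sup>2 * (perturb_const * (gap \<nu> + ydis \<nu> + xdis \<nu>))"
    unfolding \<eta>(2,3) using steps_perturbation_le[of "9 * Lg\<^sup>2"] by (intro add_left_mono mult_left_mono) auto
  finally show ?thesis by (simp add: mult.assoc)
qed

end

lemma (in sonata_problem) linear_convergence:
  "\<exists>\<alpha>bar. 0 < \<alpha>bar \<and> \<alpha>bar \<le> 1 \<and>
     (\<forall>\<alpha> x y xh. 0 < \<alpha> \<and> \<alpha> < \<alpha>bar \<and> sonata_run m K W gf ft G \<alpha> x y xh \<longrightarrow>
        (\<forall>i<m. \<exists>z C. 0 < z \<and> z < 1 \<and> (\<forall>\<nu>. \<bar>U (x i \<nu>) - U xstar\<bar> \<le> C * z ^ \<nu>)))"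
proof -
  have coeffs: "0 \<le> gap_const * tracking_const" "0 \<le> 9 * mix_const * Lg\<^sup>2"
    "0 \<le> (1 + \<rho>) / 2" "(1 + \<rho>) / 2 < 1"
    using gap_const_nonneg mix_const_nonneg rho by (auto simp: tracking_const_def)
  obtain \<alpha>max where \<alpha>max: "0 < \<alpha>max" and rate: "\<And>\<alpha> u ex ey :: nat \<Rightarrow> real. 0 < \<alpha> \<Longrightarrow> \<alpha> \<le> \<alpha>max \<Longrightarrow>
       (\<And>n. 0 \<le> u n) \<Longrightarrow> (\<And>n. 0 \<le> ex n) \<Longrightarrow> (\<And>n. 0 \<le> ey n) \<Longrightarrow>
       (\<And>n. u (Suc n) \<le> (1 - gap_rate * \<alpha>) * u n + \<alpha> * (gap_const * tracking_const) * (ey n + ex n)) \<Longrightarrow>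
       (\<And>n. ex (Suc n) \<le> (1 + \<rho>) / 2 * ex n + \<alpha>\<^sup>2 * perturb_const * (u n + ey n + ex n)) \<Longrightarrow>
       (\<And>n. ey (Suc n) \<le> (1 + \<rho>) / 2 * ey n + 9 * mix_const * Lg\<^sup>2 * ex n
                           + \<alpha>\<^sup>2 * perturb_const * (u n + ey n + ex n)) \<Longrightarrow>
       \<exists>C r. 0 < r \<and> r < 1 \<and> (\<forall>n. u n \<le> C * r ^ n)"
    using coupled_recursions_linear_rate[OF gap_rate_pos gap_rate_le_1 coeffs(1) perturb_const_nonneg coeffs(2-4)]
    by blast
  define \<alpha>bar where "\<alpha>bar = min (min 1 (mt / (2 * Lg))) \<alpha>max"
  have "0 < \<alpha>bar" "\<alpha>bar \<le> 1" using \<alpha>max mt_pos Lg_pos by (auto simp: \<alpha>bar_def)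
  moreover have "\<forall>i<m. \<exists>z C. 0 < z \<and> z < 1 \<and> (\<forall>\<nu>. \<bar>U (x i \<nu>) - U xstar\<bar> \<le> C * z ^ \<nu>)"
    if run: "0 < \<alpha>" "\<alpha> < \<alpha>bar" "sonata_run m K W gf ft G \<alpha> x y xh" for \<alpha> x y xh
  proof -
    have "\<alpha> * Lg \<le> mt / (2 * Lg) * Lg" using run Lg_pos by (intro mult_right_mono) (auto simp: \<alpha>bar_def)
    with Lg_pos have small: "\<alpha> * Lg \<le> mt / 2" by simp
    interpret T: sonata_trajectory m K Oset f gf Hf G \<mu> L xstar E W ft gft Lt mut \<rho> \<alpha> x y xh
      using run small by unfold_locales (auto simp: \<alpha>bar_def)
    obtain C r where "0 < r" "r < 1" "\<And>n. T.gap n \<le> C * r ^ n"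
      using rate[of \<alpha> T.gap T.xdis T.ydis] run T.gap_nonneg T.gap_coupled T.xdis_coupled T.ydis_coupled
      by (auto simp: \<alpha>bar_def T.xdis_def T.ydis_def disagreement_nonneg)
    thus ?thesis using T.agent_gap_le_gap by (meson order_trans)
  qed
  ultimately show ?thesis by blast
qed

theorem theorem3p9:
  fixes m :: nat
    and K Oset :: "'a::euclidean_space set"
    and f :: "nat \<Rightarrow> 'a \<Rightarrow> real"
    and gf :: "nat \<Rightarrow> 'a \<Rightarrow> 'a"
    and Hf :: "nat \<Rightarrow> 'a \<Rightarrow> 'a \<Rightarrow> 'a"
    and G :: "'a \<Rightarrow> real"
    and \<mu> L :: real
    and xstar :: 'a
    and E :: "(nat \<times> nat) set"
    and W :: "nat \<Rightarrow> nat \<Rightarrow> real"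
    and ft :: "nat \<Rightarrow> 'a \<Rightarrow> 'a \<Rightarrow> real"
    and gft :: "nat \<Rightarrow> 'a \<Rightarrow> 'a \<Rightarrow> 'a"
    and Hft :: "nat \<Rightarrow> 'a \<Rightarrow> 'a \<Rightarrow> 'a \<Rightarrow> 'a"
    and Lt mut Dl Du :: "nat \<Rightarrow> real"
  defines "HF \<equiv> (\<lambda>x h. (1 / real m) *\<^sub>R (\<Sum>i<m. Hf i x h))"
    and "U \<equiv> (\<lambda>x. (1 / real m) * (\<Sum>i<m. f i x) + G x)"
  assumes m_pos: "m \<ge> 1"
    (* Assumption (A) *)
    and K_ne: "K \<noteq> {}" and K_closed: "closed K" and K_convex: "convex K"
    and O_open: "open Oset" and K_sub_O: "K \<subseteq> Oset"
    and f_grad: "\<And>i x. i < m \<Longrightarrow> x \<in> Oset \<Longrightarrow> (f i has_derivative (\<lambda>h. gf i x \<bullet> h)) (at x)"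
    and f_hess: "\<And>i x. i < m \<Longrightarrow> x \<in> Oset \<Longrightarrow> (gf i has_derivative Hf i x) (at x)"
    and f_convex: "\<And>i. i < m \<Longrightarrow> convex_on Oset (f i)"
    and mu_pos: "\<mu> > 0"
    and F_hess_bounds: "\<And>x h. x \<in> K \<Longrightarrow>
          \<mu> * (norm h)\<^sup>2 \<le> h \<bullet> HF x h \<and> h \<bullet> HF x h \<le> L * (norm h)\<^sup>2"
    and G_convex: "convex_on K G"
    and xstar_min: "xstar \<in> K" "\<And>x. x \<in> K \<Longrightarrow> U xstar \<le> U x"
    (* Assumption (B) *)
    and graph: "connected_undirected_graph m E"
    (* Assumption (W) *)
    and W_ok: "weight_matrix_ok m E W"
    (* Assumption (C) *)
    and ft_C2: "\<And>i. i < m \<Longrightarrow> C2_on (Oset \<times> Oset) (\<lambda>p. ft i (fst p) (snd p))"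
    and ft_grad: "\<And>i x y. i < m \<Longrightarrow> x \<in> Oset \<Longrightarrow> y \<in> Oset \<Longrightarrow>
          ((\<lambda>z. ft i z y) has_derivative (\<lambda>h. gft i x y \<bullet> h)) (at x)"
    and ft_hess: "\<And>i x y. i < m \<Longrightarrow> x \<in> Oset \<Longrightarrow> y \<in> Oset \<Longrightarrow>
          ((\<lambda>z. gft i z y) has_derivative Hft i x y) (at x)"
    and ft_consistent: "\<And>i x. i < m \<Longrightarrow> x \<in> K \<Longrightarrow> gft i x x = gf i x"
    and ft_lipschitz: "\<And>i x. i < m \<Longrightarrow> x \<in> K \<Longrightarrow> lipschitz_on (Lt i) K (\<lambda>z. gft i z x)"
    and mut_pos: "\<And>i. i < m \<Longrightarrow> mut i > 0"
    and ft_strongly_convex: "\<And>i x. i < m \<Longrightarrow> x \<in> K \<Longrightarrow> strongly_convex_on (mut i) K (\<lambda>z. ft i z x)"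
    and D_le: "\<And>i. i < m \<Longrightarrow> Dl i \<le> Du i"
    and D_bounds: "\<And>i x y h. i < m \<Longrightarrow> x \<in> K \<Longrightarrow> y \<in> K \<Longrightarrow>
          Dl i * (norm h)\<^sup>2 \<le> h \<bullet> (Hft i x y h - HF x h) \<and>
          h \<bullet> (Hft i x y h - HF x h) \<le> Du i * (norm h)\<^sup>2"
    (* the condition of the theorem *)
    and mu_min_ge: "Min (mut ` {..<m}) \<ge> Min (Dl ` {..<m})"
  shows "\<exists>\<alpha>bar. 0 < \<alpha>bar \<and> \<alpha>bar \<le> 1 \<and>
           (\<forall>\<alpha> x y xh. 0 < \<alpha> \<and> \<alpha> < \<alpha>bar \<and> sonata_run m K W gf ft G \<alpha> x y xh \<longrightarrow>
              (\<forall>i<m. \<exists>z C. 0 < z \<and> z < 1 \<and>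
                 (\<forall>\<nu>. \<bar>U (x i \<nu>) - U xstar\<bar> \<le> C * z ^ \<nu>)))"
proof -
  obtain \<rho> where \<rho>: "0 < \<rho>" "\<rho> < 1"
    "\<And>z::nat \<Rightarrow> 'a. disagreement m (\<lambda>i. \<Sum>j<m. W i j *\<^sub>R z j) \<le> \<rho> * disagreement m z"
    using mixing_contracts_disagreement[OF m_pos graph W_ok] by blast
  interpret S: sonata_problem m K Oset f gf Hf G \<mu> L xstar E W ft gft Lt mut \<rho>
    using m_pos K_ne K_convex O_open K_sub_O f_grad f_hess f_convex mu_pos F_hess_bounds G_convex
      xstar_min W_ok \<rho> ft_grad ft_consistent ft_lipschitz mut_pos ft_strongly_convex
    unfolding HF_def U_def by unfold_locales auto
  have "U = S.U" by (simp add: fun_eq_iff U_def S.U_def S.F_def)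
  with S.linear_convergence show ?thesis by simp
qed

end
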